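(* Under the standing assumptions below, the limit pair $(\mu,f)$ satisfies $$\int_0^T\int_{\mathbb R^{2D}}\big(|v-\bar v|^2+\lambda|f(t,x,v)|^2\big)\,d\mu(t,x,v)\,dt\;\le\;\sqrt\lambda\int_{\mathbb R^{2D}}|v-\bar v|^2\,d\mu_0(x,v).$$
   Context: Fix integers $D\ge1$, a horizon $T>0$, a weight $\lambda>0$ and a target velocity $\bar v\in\mathbb R^D$. The interaction kernel $\Psi:\mathbb R^D\times\mathbb R^D\to\mathbb R$ is Lipschitz continuous, symmetric, nonnegative and bounded. The admissible control set $\mathcal F$ consists of Carathéodory functions $f:[0,T]\times\mathbb R^{2D}\to\mathbb R^D$ with $f(t,\cdot)\in W^{1,\infty}_{loc}(\mathbb R^{2D})$ and $|f(t,0)|+\|f(t,\cdot)\|_{Lip}\le C_B$ for a.e. $t$, with $C_B\ge\lambda^{-1/2}(1+|\bar v|)$. For $N\ge1$, $f\in\mathcal F$ and initial data $(x_{i0},v_{i0})_{i=1}^N$, the $N$-particle state solves $\dot x_i=v_i$, $\dot v_i=\frac1N\sum_{j}\Psi(x_i,x_j)(v_j-v_i)+f(t,x_i,v_i)$, $(x_i,v_i)(0)=(x_{i0},v_{i0})$; the particle problem $\mathcal Q_N$ is to minimize $\frac1N\sum_{i=1}^N\int_0^T|v_i-\bar v|^2+\lambda|f(t,x_i,v_i)|^2dt$ over $f\in\mathcal F$, and a minimizer is an optimal control. Its empirical measure is $\mu_N(t)=\frac1N\sum_i\delta_{x_i(t)}\otimes\delta_{v_i(t)}$. $\mathcal W_1$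 denotes the 1-Wasserstein distance. Standing assumptions: $\mu_0$ is a Borel probability measure on $\mathbb R^{2D}$ with support in the ball $B(0,R)\subset\mathbb R^{2D}$. There is a sequence $N_k\to\infty$ and, for each $k$, initial data $(x_{i0},v_{i0})\in B(0,R)$, $i=1,\dots,N_k$, with $\mathcal W_1(\mu_{N_k}(0),\mu_0)\to0$, and an optimal control $f_{N_k}$ of $\mathcal Q_{N_k}$ with optimal trajectory and empirical measures $\mu_{N_k}(t)$. The pair $(\mu,f)$, $\mu\in C([0,T];P_1(\mathbb R^{2D}))$, $f\in\mathcal F$, is a weak solution (in the sense of distributions, tested against $C_0^\infty([0,T]\times\mathbb R^{2D})$ functions) of $\partial_t\mu+v\cdot\nabla_x\mu+\nabla_v\cdot(Q+f\mu)=0$, $\mu(0)=\mu_0$, where $Q(t,x,v)=\mu(t,x,v)\int\Psi(x,y)(v_*-v)\,d\mu(t,y,v_* )$, such that $\operatorname{supp}\mu(t)\subset B(0,R)$ for all $t$, $\mathcal W_1(\mu_{N_k}(t),\mu(t))\to0$ uniformly in $t\in[0,T]$, and the lower semicontinuity inequality $\int_0^T\int(|v-\bar v|^2+\lambda|f|^2)d\mu\,dt\le\liminf_k\int_0^T\int(|v-\bar v|^2+\lambda|f_{N_k}|^2)d\mu_{N_k}\,dt$ holds (this is the optimal pair of the mean-field problem given by the existence theory). *)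

theory Defs
  imports "HOL-Analysis.Analysis" "HOL-Probability.Probability"
begin

text \<open>Phase space R^{2D} is modelled as (real^'d) \<times> (real^'d); a point is (x, v).\<close>

type_synonym 'd phase = "(real^'d) \<times> (real^'d)"

primrec Ck :: "nat \<Rightarrow> ('a::real_normed_vector \<Rightarrow> real) \<Rightarrow> bool" where
  "Ck 0 g = continuous_on UNIV g"
| "Ck (Suc k) g = (\<exists>D. (\<forall>p. (g has_derivative D p) (at p)) \<and> (\<forall>h. Ck k (\<lambda>p. D p h)))"

definition smooth_fn :: "('a::real_normed_vector \<Rightarrow> real) \<Rightarrow> bool" where
  "smooth_fn g \<longleftrightarrow> (\<forall>k. Ck k g)"

text \<open>Test functions C_0^\<infinity>([0,T] \<times> R^{2D}): smooth, compactly supported in (-\<infinity>,T) \<times> R^{2D}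
  (so they vanish near t = T; the initial datum enters through the t = 0 term).\<close>
definition test_fn :: "real \<Rightarrow> (real \<times> ('d::finite) phase \<Rightarrow> real) \<Rightarrow> bool" where
  "test_fn T \<phi> \<longleftrightarrow> smooth_fn \<phi> \<and>
     (\<exists>K. compact K \<and> K \<subseteq> {p. fst p < T} \<and> (\<forall>p. p \<notin> K \<longrightarrow> \<phi> p = 0))"

text \<open>Admissible controls \<F>: Caratheodory (measurable in t for each state, Lipschitz hence
  continuous and W^{1,\<infinity>}_loc in the state for a.e. t) with |f(t,0)| + Lip(f(t,.)) \<le> C_B a.e.\<close>
definition admissible :: "real \<Rightarrow> real \<Rightarrow> (real \<Rightarrow> ('d::finite) phase \<Rightarrow> real^'d) \<Rightarrow> bool" where
  "admissible T CB f \<longleftrightarrow>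
     (\<forall>z. (\<lambda>t. f t z) \<in> borel_measurable (lebesgue_on {0..T})) \<and>
     (AE t in lebesgue_on {0..T}. \<exists>L. L-lipschitz_on UNIV (f t) \<and> norm (f t 0) + L \<le> CB)"

definition particle_traj ::
  "real \<Rightarrow> (real^('d::finite) \<Rightarrow> real^'d \<Rightarrow> real) \<Rightarrow> nat \<Rightarrow> (real \<Rightarrow> 'd phase \<Rightarrow> real^'d) \<Rightarrow>
   (nat \<Rightarrow> real^'d) \<Rightarrow> (nat \<Rightarrow> real^'d) \<Rightarrow> (nat \<Rightarrow> real \<Rightarrow> real^'d) \<Rightarrow> (nat \<Rightarrow> real \<Rightarrow> real^'d) \<Rightarrow> bool" where
  "particle_traj T \<Psi> N f x0 v0 x v \<longleftrightarrow>
     (\<forall>i<N. \<forall>t\<in>{0..T}.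
        (v i has_integral (x i t - x0 i)) {0..t} \<and>
        ((\<lambda>s. (1 / real N) *\<^sub>R (\<Sum>j<N. \<Psi> (x i s) (x j s) *\<^sub>R (v j s - v i s)) + f s (x i s, v i s))
            has_integral (v i t - v0 i)) {0..t})"

definition particle_cost ::
  "real \<Rightarrow> real \<Rightarrow> real^('d::finite) \<Rightarrow> nat \<Rightarrow> (real \<Rightarrow> 'd phase \<Rightarrow> real^'d) \<Rightarrow>
   (nat \<Rightarrow> real \<Rightarrow> real^'d) \<Rightarrow> (nat \<Rightarrow> real \<Rightarrow> real^'d) \<Rightarrow> ennreal" where
  "particle_cost T lam vbar N f x v =
     ennreal (1 / real N) * (\<Sum>i<N. \<integral>\<^sup>+ t\<in>{0..T}.
        ennreal ((norm (v i t - vbar))\<^sup>2 + lam * (norm (f t (x i t, v i t)))\<^sup>2) \<partial>lborel)"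

definition optimal_control ::
  "real \<Rightarrow> (real^('d::finite) \<Rightarrow> real^'d \<Rightarrow> real) \<Rightarrow> real \<Rightarrow> real^'d \<Rightarrow> real \<Rightarrow> nat \<Rightarrow>
   (nat \<Rightarrow> real^'d) \<Rightarrow> (nat \<Rightarrow> real^'d) \<Rightarrow> (real \<Rightarrow> 'd phase \<Rightarrow> real^'d) \<Rightarrow>
   (nat \<Rightarrow> real \<Rightarrow> real^'d) \<Rightarrow> (nat \<Rightarrow> real \<Rightarrow> real^'d) \<Rightarrow> bool" where
  "optimal_control T \<Psi> lam vbar CB N x0 v0 f x v \<longleftrightarrow>
     admissible T CB f \<and> particle_traj T \<Psi> N f x0 v0 x v \<and>
     (\<forall>g y w. admissible T CB g \<longrightarrow> particle_traj T \<Psi> N g x0 v0 y w \<longrightarrow>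
        particle_cost T lam vbar N f x v \<le> particle_cost T lam vbar N g y w)"

definition empirical :: "nat \<Rightarrow> (nat \<Rightarrow> 'a::topological_space) \<Rightarrow> 'a measure" where
  "empirical N z = distr (uniform_count_measure {..<N}) borel z"

definition W1 :: "'a::metric_space measure \<Rightarrow> 'a measure \<Rightarrow> ennreal" where
  "W1 \<mu> \<nu> = (INF \<pi> \<in> {\<pi> :: ('a \<times> 'a) measure. sets \<pi> = sets borel \<and>
        distr \<pi> borel fst = \<mu> \<and> distr \<pi> borel snd = \<nu>}.
      \<integral>\<^sup>+ p. ennreal (dist (fst p) (snd p)) \<partial>\<pi>)"

definition P1 :: "'a::real_normed_vector measure \<Rightarrow> bool" where
  "P1 \<mu> \<longleftrightarrow> prob_space \<mu> \<and> sets \<mu> = sets borel \<and> (\<integral>\<^sup>+ z. ennreal (norm z) \<partial>\<mu>) < \<infinity>"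

definition msupp :: "'a::metric_space measure \<Rightarrow> 'a set" where
  "msupp \<mu> = {z. \<forall>e>0. emeasure \<mu> (ball z e) > 0}"

text \<open>Weak (distributional) solution of
  \<partial>_t \<mu> + v\<cdot>\<nabla>_x \<mu> + \<nabla>_v\<cdot>(Q + f\<mu>) = 0, \<mu>(0) = \<mu>0, tested against test_fn.
  The integrand \<phi>'(t,x,v)(1,(v,w)) = \<partial>_t\<phi> + v\<cdot>\<nabla>_x\<phi> + w\<cdot>\<nabla>_v\<phi>, with
  w = \<integral>\<Psi>(x,y)(v_*-v) d\<mu>(t,y,v_*) + f(t,x,v).\<close>
definition weak_solution ::
  "real \<Rightarrow> (real^('d::finite) \<Rightarrow> real^'d \<Rightarrow> real) \<Rightarrow> 'd phase measure \<Rightarrow>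
   (real \<Rightarrow> 'd phase \<Rightarrow> real^'d) \<Rightarrow> (real \<Rightarrow> 'd phase measure) \<Rightarrow> bool" where
  "weak_solution T \<Psi> \<mu>0 f \<mu> \<longleftrightarrow>
     (\<forall>\<phi> \<phi>'. test_fn T \<phi> \<longrightarrow> (\<forall>p. (\<phi> has_derivative \<phi>' p) (at p)) \<longrightarrow>
        (\<integral>t. (\<integral>z. \<phi>' (t, z) (1, (snd z,
              (\<integral>w. \<Psi> (fst z) (fst w) *\<^sub>R (snd w - snd z) \<partial>(\<mu> t)) + f t z)) \<partial>(\<mu> t))
          \<partial>(lebesgue_on {0..T}))
        + (\<integral>z. \<phi> (0, z) \<partial>\<mu>0) = 0)"

end

theory Submission
  imports Defs
begin

text \<open>Compare the optimal controls with the explicit feedback \<open>g(t,x,v) = -(v - vbar)/sqrt lam\<close>,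
  which is admissible because \<open>CB \<ge> (1 + |vbar|)/sqrt lam\<close>.  Along the \<open>N\<close>-particle trajectory of \<open>g\<close>
  the energy \<open>E = \<Sum>\<^sub>i |v\<^sub>i - vbar|\<^sup>2\<close> satisfies \<open>E' \<le> -(2/sqrt lam) E\<close>, since alignment with a symmetric
  nonnegative kernel only dissipates energy; the running cost of \<open>g\<close> is \<open>2 |v\<^sub>i - vbar|\<^sup>2\<close>, so the cost
  of \<open>g\<close>, and hence that of the optimal \<open>f\<^sub>N\<close>, is at most \<open>sqrt lam \<integral> |v - vbar|\<^sup>2 d\<mu>\<^sub>N(0)\<close>.
  The initial data stay in \<open>B(0,R)\<close>, where \<open>|v - vbar|\<^sup>2\<close> agrees with a bounded Lipschitz function,
  so \<open>W\<^sub>1\<close>-convergence of \<open>\<mu>\<^sub>N(0)\<close> bounds the limit superior of these costs by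
  \<open>sqrt lam \<integral> |v - vbar|\<^sup>2 d\<mu>\<^sub>0\<close>, and lower semicontinuity passes the bound to \<open>(\<mu>, f)\<close>.

  The trajectory of \<open>g\<close> exists because the system with velocities clamped to a cube is globally
  Lipschitz, hence solvable by Picard iteration, and by the energy estimate the clamp is inactive.\<close>

section \<open>Picard iteration for finite Lipschitz systems\<close>

lemma has_integral_power_from_0:
  fixes t :: real
  assumes "0 \<le> t"
  shows "((\<lambda>s. s ^ n) has_integral t ^ Suc n / real (Suc n)) {0..t}"
proof -
  have "((\<lambda>s. s ^ Suc n / real (Suc n)) has_real_derivative s ^ n) (at s within {0..t})" for s
    by (intro derivative_eq_intros) auto
  then have "((\<lambda>s. s ^ n) has_integral t ^ Suc n / real (Suc n) - 0 ^ Suc n / real (Suc n)) {0..t}"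
    by (intro fundamental_theorem_of_calculus assms)
      (simp add: has_real_derivative_iff_has_vector_derivative[symmetric])
  then show ?thesis by simp
qed

primrec picard_iterate ::
  "(nat \<Rightarrow> (nat \<Rightarrow> 'a) \<Rightarrow> 'a) \<Rightarrow> (nat \<Rightarrow> 'a) \<Rightarrow> nat \<Rightarrow> nat \<Rightarrow> real \<Rightarrow> 'a::banach" where
  "picard_iterate F y0 0 = (\<lambda>i t. y0 i)"
| "picard_iterate F y0 (Suc n) =
     (\<lambda>i t. y0 i + integral {0..t} (\<lambda>s. F i (\<lambda>j. picard_iterate F y0 n j s)))"

locale finite_lipschitz_system =
  fixes N :: nat and L :: real and F :: "nat \<Rightarrow> (nat \<Rightarrow> 'a::banach) \<Rightarrow> 'a"
  assumes lipschitz_nonneg: "0 \<le> L"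
    and lipschitz: "\<And>i Y Z. i < N \<Longrightarrow> norm (F i Y - F i Z) \<le> L * (\<Sum>j<N. norm (Y j - Z j))"
begin

lemma continuous_on_F:
  assumes i: "i < N" and y: "\<And>j. j < N \<Longrightarrow> continuous_on S (y j)"
  shows "continuous_on S (\<lambda>s. F i (\<lambda>j. y j s))"
  unfolding continuous_on_def
proof (intro ballI)
  fix s0 assume s0: "s0 \<in> S"
  have "((\<lambda>s. L * (\<Sum>j<N. norm (y j s - y j s0))) \<longlongrightarrow> L * (\<Sum>j<N. norm (y j s0 - y j s0))) (at s0 within S)"
    using y s0 unfolding continuous_on_def by (intro tendsto_intros) auto
  then have "((\<lambda>s. L * (\<Sum>j<N. norm (y j s - y j s0))) \<longlongrightarrow> 0) (at s0 within S)"
    by simp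
  then have "((\<lambda>s. F i (\<lambda>j. y j s) - F i (\<lambda>j. y j s0)) \<longlongrightarrow> 0) (at s0 within S)"
    by (rule Lim_null_comparison[rotated]) (intro always_eventually allI lipschitz i)
  then show "((\<lambda>s. F i (\<lambda>j. y j s)) \<longlongrightarrow> F i (\<lambda>j. y j s0)) (at s0 within S)"
    using Lim_null by blast
qed

lemma continuous_on_picard_iterate:
  assumes "i < N"
  shows "continuous_on {0..T} (picard_iterate F y0 n i)"
  using assms
proof (induction n arbitrary: i)
  case 0
  then show ?case by simp
next
  case (Suc n)
  have "continuous_on {0..T} (\<lambda>s. F i (\<lambda>j. picard_iterate F y0 n j s))"
    using Suc by (intro continuous_on_F) auto
  then have "continuous_on {0..T} (\<lambda>t. integral {0..t} (\<lambda>s. F i (\<lambda>j. picard_iterate F y0 n j s)))"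
    by (intro indefinite_integral_continuous_1 integrable_continuous_interval)
  then show ?case by (simp add: continuous_intros)
qed

lemma continuous_on_F_picard_iterate:
  assumes "i < N"
  shows "continuous_on {0..T} (\<lambda>s. F i (\<lambda>j. picard_iterate F y0 n j s))"
  using assms by (intro continuous_on_F continuous_on_picard_iterate)

lemma norm_picard_iterate_step_le:
  assumes i: "i < N"
  shows "norm (picard_iterate F y0 (Suc (Suc n)) i t - picard_iterate F y0 (Suc n) i t)
    \<le> integral {0..t} (\<lambda>s. L * (\<Sum>j<N. norm (picard_iterate F y0 (Suc n) j s - picard_iterate F y0 n j s)))"
proof -
  define P where "P = picard_iterate F y0"
  let ?G = "\<lambda>m s. F i (\<lambda>j. P m j s)"
  have int: "?G m integrable_on {0..t}" for m
    unfolding P_def using i by (intro integrable_continuous_interval continuous_on_F_picard_iterate)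
  have "continuous_on {0..t} (\<lambda>s. L * (\<Sum>j<N. norm (P (Suc n) j s - P n j s)))"
    unfolding P_def by (intro continuous_intros continuous_on_picard_iterate) auto
  then have int_bound: "(\<lambda>s. L * (\<Sum>j<N. norm (P (Suc n) j s - P n j s))) integrable_on {0..t}"
    by (rule integrable_continuous_interval)
  have "P (Suc (Suc n)) i t - P (Suc n) i t = integral {0..t} (?G (Suc n)) - integral {0..t} (?G n)"
    by (simp add: P_def)
  also have "\<dots> = integral {0..t} (\<lambda>s. ?G (Suc n) s - ?G n s)"
    by (rule integral_diff[symmetric, OF int int])
  also have "norm \<dots> \<le> integral {0..t} (\<lambda>s. L * (\<Sum>j<N. norm (P (Suc n) j s - P n j s)))"
    using int int_bound lipschitz[OF i] by (intro integral_norm_bound_integral integrable_diff) auto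
  finally show ?thesis by (simp add: P_def)
qed

lemma picard_iterate_step_bound:
  assumes "t \<in> {0..T}"
  shows "(\<Sum>i<N. norm (picard_iterate F y0 (Suc n) i t - picard_iterate F y0 n i t))
    \<le> (\<Sum>i<N. norm (F i y0)) * T * (real N * L * t) ^ n / fact n"
  using assms
proof (induction n arbitrary: t)
  case 0
  then have "norm (picard_iterate F y0 1 i t - picard_iterate F y0 0 i t) \<le> T * norm (F i y0)" for i
    by (simp add: mult_right_mono)
  then show ?case
    by (simp add: sum_distrib_left mult.commute sum_mono)
next
  case (Suc n)
  define P where "P = picard_iterate F y0"
  define C where "C = (\<Sum>i<N. norm (F i y0)) * T * (real N * L) ^ n / fact n"
  have "norm (P (Suc (Suc n)) i t - P (Suc n) i t) \<le> L * (C * (t ^ Suc n / real (Suc n)))"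
    if i: "i < N" for i
  proof -
    have "continuous_on {0..t} (\<lambda>s. L * (\<Sum>j<N. norm (P (Suc n) j s - P n j s)))"
      unfolding P_def by (intro continuous_intros continuous_on_picard_iterate) auto
    then have int: "((\<lambda>s. L * (\<Sum>j<N. norm (P (Suc n) j s - P n j s))) has_integral
        integral {0..t} (\<lambda>s. L * (\<Sum>j<N. norm (P (Suc n) j s - P n j s)))) {0..t}"
      by (intro integrable_integral integrable_continuous_interval)
    have "norm (P (Suc (Suc n)) i t - P (Suc n) i t)
        \<le> integral {0..t} (\<lambda>s. L * (\<Sum>j<N. norm (P (Suc n) j s - P n j s)))"
      unfolding P_def using i by (rule norm_picard_iterate_step_le)
    also have "\<dots> \<le> L * (C * (t ^ Suc n / real (Suc n)))"
    proof (rule has_integral_le[OF int])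
      show "((\<lambda>s. L * (C * s ^ n)) has_integral L * (C * (t ^ Suc n / real (Suc n)))) {0..t}"
        using Suc.prems by (intro has_integral_mult_right has_integral_power_from_0) auto
      fix s assume s: "s \<in> {0..t}"
      have "(\<Sum>j<N. norm (P (Suc n) j s - P n j s)) \<le> C * s ^ n"
        using Suc.IH[of s] s Suc.prems by (simp add: P_def C_def power_mult_distrib)
      then show "L * (\<Sum>j<N. norm (P (Suc n) j s - P n j s)) \<le> L * (C * s ^ n)"
        using lipschitz_nonneg by (rule mult_left_mono)
    qed
    finally show ?thesis .
  qed
  then have "(\<Sum>i<N. norm (P (Suc (Suc n)) i t - P (Suc n) i t))
      \<le> (\<Sum>i<N. L * (C * (t ^ Suc n / real (Suc n))))"
    by (intro sum_mono) auto
  also have "\<dots> = (\<Sum>i<N. norm (F i y0)) * T * (real N * L * t) ^ Suc n / fact (Suc n)"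
    by (simp add: C_def field_simps power_mult_distrib)
  finally show ?case by (simp add: P_def)
qed

lemma uniform_limit_picard_iterate:
  obtains y :: "nat \<Rightarrow> real \<Rightarrow> 'a" where "\<And>i. i < N \<Longrightarrow> uniform_limit {0..T} (\<lambda>n. picard_iterate F y0 n i) (y i) sequentially"
proof
  define P where "P = picard_iterate F y0"
  define M0 where "M0 = (\<Sum>i<N. norm (F i y0))"
  define y where "y i t = y0 i + (\<Sum>m. P (Suc m) i t - P m i t)" for i t
  fix i assume i: "i < N"
  have bound: "norm (P (Suc m) i t - P m i t) \<le> M0 * T * ((real N * L * T) ^ m /\<^sub>R fact m)"
    if t: "t \<in> {0..T}" for m t
  proof -
    have "norm (P (Suc m) i t - P m i t) \<le> (\<Sum>i<N. norm (P (Suc m) i t - P m i t))"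
      using i by (intro member_le_sum) auto
    also have "\<dots> \<le> M0 * T * (real N * L * t) ^ m / fact m"
      unfolding P_def M0_def by (rule picard_iterate_step_bound[OF t])
    also have "\<dots> \<le> M0 * T * (real N * L * T) ^ m / fact m"
      using t lipschitz_nonneg
      by (intro divide_right_mono mult_left_mono power_mono mult_nonneg_nonneg)
        (auto simp: M0_def intro!: sum_nonneg)
    finally show ?thesis by (simp add: divide_inverse mult_ac)
  qed
  have summable: "summable (\<lambda>m. M0 * T * ((real N * L * T) ^ m /\<^sub>R fact m))"
    by (intro summable_mult summable_exp_generic)
  have "uniform_limit {0..T} (\<lambda>n t. \<Sum>m<n. P (Suc m) i t - P m i t)
      (\<lambda>t. \<Sum>m. P (Suc m) i t - P m i t) sequentially"
    by (rule Weierstrass_m_test[OF _ summable]) (rule bound)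
  then have "uniform_limit {0..T} (\<lambda>n t. y0 i + (\<Sum>m<n. P (Suc m) i t - P m i t)) (y i) sequentially"
    unfolding y_def by (intro uniform_limit_intros)
  moreover have "y0 i + (\<Sum>m<n. P (Suc m) i t - P m i t) = P n i t" for n t
    using sum_lessThan_telescope[of "\<lambda>m. P m i t" n] by (simp add: P_def)
  ultimately show "uniform_limit {0..T} (\<lambda>n. picard_iterate F y0 n i) (y i) sequentially"
    by (simp add: P_def)
qed

lemma uniform_limit_F:
  assumes i: "i < N" and lim: "\<And>j. j < N \<Longrightarrow> uniform_limit S (\<lambda>n. Y n j) (y j) sequentially"
  shows "uniform_limit S (\<lambda>n s. F i (\<lambda>j. Y n j s)) (\<lambda>s. F i (\<lambda>j. y j s)) sequentially"
  unfolding uniform_limit_iff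
proof (intro allI impI)
  fix e :: real assume e: "e > 0"
  define e' where "e' = e / (L * real N + 1)"
  have pos: "0 < 1 + L * real N"
    using lipschitz_nonneg by (simp add: add_pos_nonneg)
  have e': "e' > 0" and Le': "L * real N * e' < e"
    using e pos by (simp_all add: e'_def field_simps)
  have "\<forall>j\<in>{..<N}. \<forall>\<^sub>F n in sequentially. \<forall>s\<in>S. dist (Y n j s) (y j s) < e'"
    using lim e' unfolding uniform_limit_iff by auto
  then have "\<forall>\<^sub>F n in sequentially. \<forall>j\<in>{..<N}. \<forall>s\<in>S. dist (Y n j s) (y j s) < e'"
    by (rule eventually_ball_finite[rotated]) simp
  then show "\<forall>\<^sub>F n in sequentially. \<forall>s\<in>S. dist (F i (\<lambda>j. Y n j s)) (F i (\<lambda>j. y j s)) < e"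
  proof eventually_elim
    case (elim n)
    show ?case
    proof
      fix s assume s: "s \<in> S"
      have "dist (F i (\<lambda>j. Y n j s)) (F i (\<lambda>j. y j s)) \<le> L * (\<Sum>j<N. norm (Y n j s - y j s))"
        unfolding dist_norm using lipschitz[OF i] .
      also have "\<dots> \<le> L * (\<Sum>j<N. e')"
        using elim s lipschitz_nonneg
        by (intro mult_left_mono sum_mono) (auto simp: dist_norm less_imp_le)
      also have "\<dots> < e" using Le' by (simp add: mult_ac)
      finally show "dist (F i (\<lambda>j. Y n j s)) (F i (\<lambda>j. y j s)) < e" .
    qed
  qed
qed

lemma exists_integral_solution:
  obtains y :: "nat \<Rightarrow> real \<Rightarrow> 'a" where "\<And>i. i < N \<Longrightarrow> continuous_on {0..T} (y i)"
    and "\<And>i t. i < N \<Longrightarrow> t \<in> {0..T} \<Longrightarrow> ((\<lambda>s. F i (\<lambda>j. y j s)) has_integral y i t - y0 i) {0..t}"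
proof -
  obtain y where lim: "\<And>i. i < N \<Longrightarrow> uniform_limit {0..T} (\<lambda>n. picard_iterate F y0 n i) (y i) sequentially"
    using uniform_limit_picard_iterate[of y0 T] by blast
  have cont: "continuous_on {0..T} (y i)" if "i < N" for i
    by (rule uniform_limit_theorem[OF _ lim[OF that]])
      (auto intro: always_eventually continuous_on_picard_iterate that)
  have "((\<lambda>s. F i (\<lambda>j. y j s)) has_integral y i t - y0 i) {0..t}" if i: "i < N" and t: "t \<in> {0..T}" for i t
  proof -
    have "uniform_limit {0..t} (\<lambda>n s. F i (\<lambda>j. picard_iterate F y0 n j s)) (\<lambda>s. F i (\<lambda>j. y j s)) sequentially"
      using t by (intro uniform_limit_F i uniform_limit_on_subset[OF lim]) auto
    then obtain I J where I: "\<And>n. ((\<lambda>s. F i (\<lambda>j. picard_iterate F y0 n j s)) has_integral I n) {0..t}"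
      and J: "((\<lambda>s. F i (\<lambda>j. y j s)) has_integral J) {0..t}" and "I \<longlonglongrightarrow> J"
      by (rule uniform_limit_integral) (use continuous_on_F_picard_iterate i t in auto)
    then have "(\<lambda>n. picard_iterate F y0 (Suc n) i t) \<longlonglongrightarrow> y0 i + J"
      by (simp add: integral_unique[OF I] tendsto_add)
    moreover have "(\<lambda>n. picard_iterate F y0 (Suc n) i t) \<longlonglongrightarrow> y i t"
      using tendsto_uniform_limitI[OF lim[OF i] t] by (rule LIMSEQ_Suc)
    ultimately have "y i t = y0 i + J" using LIMSEQ_unique by blast
    then show ?thesis using J by simp
  qed
  with cont that show ?thesis by blast
qed

lemma integral_solution_has_vector_derivative:
  assumes cont: "\<And>j. j < N \<Longrightarrow> continuous_on {0..T} (y j)"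
    and sol: "\<And>t. t \<in> {0..T} \<Longrightarrow> ((\<lambda>s. F i (\<lambda>j. y j s)) has_integral y i t - y0) {0..t}"
    and i: "i < N" and s: "s \<in> {0..T}"
  shows "(y i has_vector_derivative F i (\<lambda>j. y j s)) (at s within {0..T})"
proof -
  have F: "continuous_on {0..T} (\<lambda>s. F i (\<lambda>j. y j s))"
    using cont i by (rule continuous_on_F[rotated])
  have deriv: "((\<lambda>t. y0 + integral {0..t} (\<lambda>s. F i (\<lambda>j. y j s))) has_vector_derivative F i (\<lambda>j. y j s))
      (at s within {0..T})"
    using integral_has_vector_derivative[OF F s] by (auto intro: derivative_eq_intros)
  have "y i t = y0 + integral {0..t} (\<lambda>s. F i (\<lambda>j. y j s))" if "t \<in> {0..T}" for t
    using integral_unique[OF sol[OF that]] by simp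
  then show ?thesis
    by (rule has_vector_derivative_transform[OF s _ deriv])
qed

end

section \<open>Clamping and dissipative alignment\<close>

lemma clamp_inner_Basis:
  assumes "\<forall>i\<in>Basis. a \<bullet> i \<le> b \<bullet> i" and "i \<in> Basis"
  shows "clamp a b x \<bullet> i = max (a \<bullet> i) (min (x \<bullet> i) (b \<bullet> i))"
proof -
  have "clamp a b x \<bullet> i = (if x \<bullet> i < a \<bullet> i then a \<bullet> i else if x \<bullet> i \<le> b \<bullet> i then x \<bullet> i else b \<bullet> i)"
    using assms by (simp add: clamp_def)
  then show ?thesis
    using assms by simp
qed

lemma inner_clamp_diff_nonneg:
  fixes x y :: "'a::euclidean_space"
  shows "0 \<le> (y - x) \<bullet> (clamp a b y - clamp a b x)"
proof (cases "\<forall>i\<in>Basis. a \<bullet> i \<le> b \<bullet> i")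
  case True
  have "0 \<le> (\<Sum>i\<in>Basis. ((y - x) \<bullet> i) * ((clamp a b y - clamp a b x) \<bullet> i))"
  proof (rule sum_nonneg)
    fix i :: 'a assume i: "i \<in> Basis"
    define m where "m s = max (a \<bullet> i) (min s (b \<bullet> i))" for s
    have mono: "m s \<le> m t" if "s \<le> t" for s t
      using that unfolding m_def by linarith
    have "(clamp a b y - clamp a b x) \<bullet> i = m (y \<bullet> i) - m (x \<bullet> i)"
      using True i by (simp add: inner_diff_left clamp_inner_Basis m_def)
    moreover have "0 \<le> (y \<bullet> i - x \<bullet> i) * (m (y \<bullet> i) - m (x \<bullet> i))"
      using mono[of "y \<bullet> i" "x \<bullet> i"] mono[of "x \<bullet> i" "y \<bullet> i"]
      by (cases "y \<bullet> i \<le> x \<bullet> i") (auto intro: mult_nonpos_nonpos)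
    ultimately show "0 \<le> ((y - x) \<bullet> i) * ((clamp a b y - clamp a b x) \<bullet> i)"
      by (simp add: inner_diff_left)
  qed
  then show ?thesis
    unfolding euclidean_inner[of "y - x" "clamp a b y - clamp a b x"] .
qed (auto simp: clamp_empty_interval)

lemma norm_clamp_diff_le: "norm (clamp a b x - clamp a b y) \<le> dist a b"
proof (cases "\<forall>i\<in>Basis. a \<bullet> i \<le> b \<bullet> i")
  case True
  then have "dist (clamp a b x) (clamp a b y) \<le> diameter (cbox a b)"
    by (intro diameter_bounded_bound bounded_cbox clamp_in_interval) auto
  then show ?thesis using True by (simp add: diameter_cbox dist_norm)
qed (auto simp: clamp_empty_interval)

definition clamp_cube :: "'a::euclidean_space \<Rightarrow> real \<Rightarrow> 'a \<Rightarrow> 'a" where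
  "clamp_cube c r = clamp (c - r *\<^sub>R One) (c + r *\<^sub>R One)"

lemma clamp_cube_eq_self:
  assumes "norm (x - c) \<le> r"
  shows "clamp_cube c r x = x"
proof -
  have "\<bar>(x - c) \<bullet> i\<bar> \<le> r" if "i \<in> Basis" for i
    using Basis_le_norm[OF that, of "x - c"] assms by linarith
  then have "x \<in> cbox (c - r *\<^sub>R One) (c + r *\<^sub>R One)"
    by (fastforce simp: mem_box inner_diff_left inner_add_left abs_le_iff)
  then show ?thesis
    by (simp add: clamp_cube_def)
qed

lemma symmetric_alignment_sum_nonpos:
  fixes u c :: "nat \<Rightarrow> 'a::real_inner"
  assumes sym: "\<And>i j. \<psi> i j = \<psi> j i" and nonneg: "\<And>i j. 0 \<le> \<psi> i j"
    and mono: "\<And>i j. 0 \<le> (u i - u j) \<bullet> (c i - c j)"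
  shows "(\<Sum>i\<in>A. \<Sum>j\<in>A. \<psi> i j * (u i \<bullet> (c j - c i))) \<le> 0"
proof -
  define S where "S = (\<Sum>i\<in>A. \<Sum>j\<in>A. \<psi> i j * (u i \<bullet> (c j - c i)))"
  have S_swap: "S = (\<Sum>i\<in>A. \<Sum>j\<in>A. \<psi> i j * (u j \<bullet> (c i - c j)))"
    unfolding S_def by (subst sum.swap) (simp add: sym)
  \<comment> \<open>symmetrising turns the double sum into \<open>-1/2 \<Sum> \<psi> i j (u i - u j) \<bullet> (c i - c j)\<close>\<close>
  have "S + S = (\<Sum>i\<in>A. \<Sum>j\<in>A. \<psi> i j * (u i \<bullet> (c j - c i)) + \<psi> i j * (u j \<bullet> (c i - c j)))"
    by (subst (2) S_swap) (simp add: S_def sum.distrib)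
  also have "\<dots> = - (\<Sum>i\<in>A. \<Sum>j\<in>A. \<psi> i j * ((u i - u j) \<bullet> (c i - c j)))"
    unfolding sum_negf[symmetric]
    by (intro sum.cong refl) (simp add: algebra_simps inner_diff_left inner_diff_right)
  also have "\<dots> \<le> 0"
    by (simp add: sum_nonneg nonneg mono)
  finally show ?thesis unfolding S_def by simp
qed

lemma norm_fst_le_norm: "norm (fst z) \<le> norm z"
  using norm_fst_le[of "fst z" "snd z"] by simp

lemma norm_snd_le_norm: "norm (snd z) \<le> norm z"
  using norm_snd_le[of "snd z" "fst z"] by simp

lemma norm_scaleR_diff_le:
  "norm (p *\<^sub>R u - q *\<^sub>R w) \<le> \<bar>p - q\<bar> * norm u + \<bar>q\<bar> * norm (u - w)"
proof -
  have "p *\<^sub>R u - q *\<^sub>R w = (p - q) *\<^sub>R u + q *\<^sub>R (u - w)"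
    by (simp add: algebra_simps)
  then show ?thesis
    by (metis norm_scaleR norm_triangle_ineq)
qed

lemma norm_alignment_diff_le:
  fixes \<Psi> :: "'a::real_normed_vector \<Rightarrow> 'a \<Rightarrow> real" and c :: "'b::real_normed_vector \<Rightarrow> 'b"
  assumes lip: "Lp-lipschitz_on UNIV (\<lambda>p. \<Psi> (fst p) (snd p))"
    and bdd: "\<And>x y. \<bar>\<Psi> x y\<bar> \<le> M"
    and c_lip: "\<And>u w. norm (c u - c w) \<le> norm (u - w)"
    and c_bdd: "\<And>u w. norm (c u - c w) \<le> B"
  shows "norm (\<Psi> (fst p) (fst q) *\<^sub>R (c (snd q) - c (snd p)) - \<Psi> (fst p') (fst q') *\<^sub>R (c (snd q') - c (snd p')))
    \<le> (Lp * B + M) * (norm (p - p') + norm (q - q'))"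
proof -
  have Lp: "0 \<le> Lp" using lip by (rule lipschitz_on_nonneg)
  have M: "0 \<le> M" using bdd[of 0 0] by linarith
  have "\<bar>\<Psi> (fst p) (fst q) - \<Psi> (fst p') (fst q')\<bar> \<le> Lp * dist (fst p, fst q) (fst p', fst q')"
    using lipschitz_onD[OF lip, of "(fst p, fst q)" "(fst p', fst q')"] by (simp add: dist_real_def)
  also have "dist (fst p, fst q) (fst p', fst q') \<le> norm (p - p') + norm (q - q')"
    using norm_Pair_le[of "fst (p - p')" "fst (q - q')"] norm_fst_le_norm[of "p - p'"] norm_fst_le_norm[of "q - q'"]
    by (simp add: dist_norm)
  finally have \<Psi>_diff: "\<bar>\<Psi> (fst p) (fst q) - \<Psi> (fst p') (fst q')\<bar> \<le> Lp * (norm (p - p') + norm (q - q'))"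
    using Lp by (simp add: mult_left_mono)
  have "(c (snd q) - c (snd p)) - (c (snd q') - c (snd p')) = (c (snd q) - c (snd q')) - (c (snd p) - c (snd p'))"
    by simp
  then have "norm ((c (snd q) - c (snd p)) - (c (snd q') - c (snd p')))
      \<le> norm (c (snd q) - c (snd q')) + norm (c (snd p) - c (snd p'))"
    by (metis norm_triangle_ineq4)
  also have "\<dots> \<le> norm (p - p') + norm (q - q')"
    using c_lip[of "snd q" "snd q'"] c_lip[of "snd p" "snd p'"]
      norm_snd_le_norm[of "p - p'"] norm_snd_le_norm[of "q - q'"]
    by simp
  finally have c_diff: "norm ((c (snd q) - c (snd p)) - (c (snd q') - c (snd p'))) \<le> norm (p - p') + norm (q - q')" .
  have "norm (\<Psi> (fst p) (fst q) *\<^sub>R (c (snd q) - c (snd p)) - \<Psi> (fst p') (fst q') *\<^sub>R (c (snd q') - c (snd p')))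
      \<le> \<bar>\<Psi> (fst p) (fst q) - \<Psi> (fst p') (fst q')\<bar> * norm (c (snd q) - c (snd p))
        + \<bar>\<Psi> (fst p') (fst q')\<bar> * norm ((c (snd q) - c (snd p)) - (c (snd q') - c (snd p')))"
    by (rule norm_scaleR_diff_le)
  also have "\<dots> \<le> Lp * (norm (p - p') + norm (q - q')) * B + M * (norm (p - p') + norm (q - q'))"
    using \<Psi>_diff c_diff bdd c_bdd Lp M by (intro add_mono mult_mono) auto
  finally show ?thesis by (simp add: algebra_simps)
qed

lemma norm_mean_le_pairwise_bound:
  fixes Y Z :: "nat \<Rightarrow> 'a::real_normed_vector" and A :: "nat \<Rightarrow> 'b::real_normed_vector"
  assumes i: "i < N" and Q: "0 \<le> Q"
    and A: "\<And>j. j < N \<Longrightarrow> norm (A j) \<le> Q * (norm (Y i - Z i) + norm (Y j - Z j))"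
  shows "norm ((1 / real N) *\<^sub>R (\<Sum>j<N. A j)) \<le> 2 * Q * (\<Sum>j<N. norm (Y j - Z j))"
proof -
  define D where "D = (\<Sum>j<N. norm (Y j - Z j))"
  have N: "1 \<le> real N" using i by simp
  have D: "0 \<le> D" unfolding D_def by (simp add: sum_nonneg)
  have "norm (\<Sum>j<N. A j) \<le> (\<Sum>j<N. Q * (norm (Y i - Z i) + norm (Y j - Z j)))"
    using A by (intro order_trans[OF norm_sum] sum_mono) auto
  also have "\<dots> = real N * Q * norm (Y i - Z i) + Q * D"
    unfolding D_def by (simp add: algebra_simps sum.distrib sum_distrib_left)
  also have "\<dots> \<le> real N * (2 * Q * D)"
  proof -
    have "real N * Q * norm (Y i - Z i) \<le> real N * (Q * D)"
      unfolding D_def using i Q by (auto intro!: mult_left_mono member_le_sum)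
    moreover have "Q * D \<le> real N * (Q * D)"
      using mult_right_mono[OF N, of "Q * D"] Q D by simp
    ultimately show ?thesis by (simp add: algebra_simps)
  qed
  finally show ?thesis
    using N by (simp add: D_def divide_le_eq mult.commute)
qed

section \<open>The linear feedback competitor\<close>

text \<open>The velocities in the alignment term are clamped to a cube around \<open>vbar\<close>: this makes the
  field globally Lipschitz, whereas the alignment term itself is only locally Lipschitz. Once \<open>r\<^sup>2\<close>
  bounds the initial energy, the energy estimate shows that the clamp is never active.\<close>
definition clipped_feedback_field ::
  "nat \<Rightarrow> (real^'d \<Rightarrow> real^'d \<Rightarrow> real) \<Rightarrow> real \<Rightarrow> real^'d \<Rightarrow> real \<Rightarrow> nat \<Rightarrow> (nat \<Rightarrow> 'd phase) \<Rightarrow> 'd phase"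
  where
  "clipped_feedback_field N \<Psi> a vbar r i Y =
     (snd (Y i),
      (1 / real N) *\<^sub>R (\<Sum>j<N. \<Psi> (fst (Y i)) (fst (Y j)) *\<^sub>R
          (clamp_cube vbar r (snd (Y j)) - clamp_cube vbar r (snd (Y i))))
      - a *\<^sub>R (snd (Y i) - vbar))"

lemma norm_clipped_feedback_field_diff_le:
  fixes \<Psi> :: "real^'d \<Rightarrow> real^'d \<Rightarrow> real"
  assumes lip: "Lp-lipschitz_on UNIV (\<lambda>p. \<Psi> (fst p) (snd p))"
    and bdd: "\<And>x y. \<bar>\<Psi> x y\<bar> \<le> M" and a: "0 \<le> a" and i: "i < N"
  shows "norm (clipped_feedback_field N \<Psi> a vbar r i Y - clipped_feedback_field N \<Psi> a vbar r i Z)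
    \<le> (1 + 2 * (Lp * dist (vbar - r *\<^sub>R One) (vbar + r *\<^sub>R One) + M) + a) * (\<Sum>j<N. norm (Y j - Z j))"
proof -
  define Q where "Q = Lp * dist (vbar - r *\<^sub>R One) (vbar + r *\<^sub>R One) + M"
  define D where "D = (\<Sum>j<N. norm (Y j - Z j))"
  define A where "A Y j = \<Psi> (fst (Y i)) (fst (Y j)) *\<^sub>R (clamp_cube vbar r (snd (Y j)) - clamp_cube vbar r (snd (Y i)))"
    for Y :: "nat \<Rightarrow> 'd phase" and j
  have v_diff: "norm (snd (Y i) - snd (Z i)) \<le> D"
    using norm_snd_le_norm[of "Y i - Z i"] member_le_sum[of i "{..<N}" "\<lambda>j. norm (Y j - Z j)"] i
    by (simp add: D_def)
  have "norm (A Y j - A Z j) \<le> Q * (norm (Y i - Z i) + norm (Y j - Z j))" for j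
    unfolding Q_def A_def
    by (rule norm_alignment_diff_le[OF lip bdd])
      (auto simp: clamp_cube_def dist_clamps_le_dist_args[unfolded dist_norm] norm_clamp_diff_le)
  moreover have "0 \<le> Q"
    using lipschitz_on_nonneg[OF lip] bdd[of 0 0] by (simp add: Q_def)
  ultimately have "norm ((1 / real N) *\<^sub>R (\<Sum>j<N. A Y j - A Z j)) \<le> 2 * Q * D"
    unfolding D_def using i by (intro norm_mean_le_pairwise_bound)
  then have "norm ((1 / real N) *\<^sub>R (\<Sum>j<N. A Y j) - (1 / real N) *\<^sub>R (\<Sum>j<N. A Z j)) \<le> 2 * Q * D"
    by (simp add: sum_subtractf scaleR_diff_right)
  moreover have "norm (X - a *\<^sub>R (snd (Y i) - snd (Z i))) \<le> norm X + a * norm (snd (Y i) - snd (Z i))" for X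
    using a norm_triangle_ineq4[of X "a *\<^sub>R (snd (Y i) - snd (Z i))"] by simp
  ultimately have w_diff: "norm ((1 / real N) *\<^sub>R (\<Sum>j<N. A Y j) - (1 / real N) *\<^sub>R (\<Sum>j<N. A Z j)
      - a *\<^sub>R (snd (Y i) - snd (Z i))) \<le> 2 * Q * D + a * D"
    using v_diff a by (smt (verit) mult_left_mono)
  have "clipped_feedback_field N \<Psi> a vbar r i Y - clipped_feedback_field N \<Psi> a vbar r i Z
    = (snd (Y i) - snd (Z i),
       (1 / real N) *\<^sub>R (\<Sum>j<N. A Y j) - (1 / real N) *\<^sub>R (\<Sum>j<N. A Z j) - a *\<^sub>R (snd (Y i) - snd (Z i)))"
    by (simp add: clipped_feedback_field_def A_def algebra_simps)
  then have "norm (clipped_feedback_field N \<Psi> a vbar r i Y - clipped_feedback_field N \<Psi> a vbar r i Z)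
    \<le> norm (snd (Y i) - snd (Z i))
      + norm ((1 / real N) *\<^sub>R (\<Sum>j<N. A Y j) - (1 / real N) *\<^sub>R (\<Sum>j<N. A Z j) - a *\<^sub>R (snd (Y i) - snd (Z i)))"
    by (simp only: norm_Pair_le)
  also have "\<dots> \<le> D + (2 * Q * D + a * D)"
    using v_diff w_diff by (rule add_mono)
  finally show ?thesis by (simp add: Q_def D_def algebra_simps)
qed

lemma finite_lipschitz_system_clipped_feedback_field:
  fixes \<Psi> :: "real^'d \<Rightarrow> real^'d \<Rightarrow> real"
  assumes lip: "Lp-lipschitz_on UNIV (\<lambda>p. \<Psi> (fst p) (snd p))"
    and bdd: "\<And>x y. \<bar>\<Psi> x y\<bar> \<le> M" and a: "0 \<le> a"
  shows "\<exists>L. finite_lipschitz_system N L (clipped_feedback_field N \<Psi> a vbar r)"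
proof
  show "finite_lipschitz_system N (1 + 2 * (Lp * dist (vbar - r *\<^sub>R One) (vbar + r *\<^sub>R One) + M) + a)
      (clipped_feedback_field N \<Psi> a vbar r)"
    using lipschitz_on_nonneg[OF lip] bdd[of 0 0] a norm_clipped_feedback_field_diff_le[OF lip bdd a]
    by unfold_locales auto
qed

lemma clipped_feedback_field_eq:
  assumes "\<And>j. j < N \<Longrightarrow> norm (snd (Y j) - vbar) \<le> r" and "i < N"
  shows "clipped_feedback_field N \<Psi> a vbar r i Y =
    (snd (Y i), (1 / real N) *\<^sub>R (\<Sum>j<N. \<Psi> (fst (Y i)) (fst (Y j)) *\<^sub>R (snd (Y j) - snd (Y i)))
      - a *\<^sub>R (snd (Y i) - vbar))"
proof -
  have "clamp_cube vbar r (snd (Y j)) = snd (Y j)" if "j < N" for j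
    using assms(1)[OF that] by (rule clamp_cube_eq_self)
  then show ?thesis
    using assms(2) by (simp add: clipped_feedback_field_def)
qed

lemma clipped_feedback_energy_rate_le:
  fixes \<Psi> :: "real^'d \<Rightarrow> real^'d \<Rightarrow> real" and Y :: "nat \<Rightarrow> 'd phase"
  assumes sym: "\<And>x y. \<Psi> x y = \<Psi> y x" and nonneg: "\<And>x y. 0 \<le> \<Psi> x y"
  shows "(\<Sum>i<N. 2 * ((snd (Y i) - vbar) \<bullet> snd (clipped_feedback_field N \<Psi> a vbar r i Y)))
    \<le> - 2 * a * (\<Sum>i<N. (snd (Y i) - vbar) \<bullet> (snd (Y i) - vbar))"
proof -
  define u where "u i = snd (Y i) - vbar" for i
  define c where "c i = clamp_cube vbar r (snd (Y i))" for i
  define \<psi> where "\<psi> i j = \<Psi> (fst (Y i)) (fst (Y j))" for i j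
  have "snd (clipped_feedback_field N \<Psi> a vbar r i Y) = (1 / real N) *\<^sub>R (\<Sum>j<N. \<psi> i j *\<^sub>R (c j - c i)) - a *\<^sub>R u i" for i
    by (simp add: clipped_feedback_field_def c_def \<psi>_def u_def)
  then have "(\<Sum>i<N. 2 * (u i \<bullet> snd (clipped_feedback_field N \<Psi> a vbar r i Y)))
      = (2 / real N) * (\<Sum>i<N. \<Sum>j<N. \<psi> i j * (u i \<bullet> (c j - c i))) - 2 * a * (\<Sum>i<N. u i \<bullet> u i)"
    by (simp add: inner_diff_right inner_sum_right sum_subtractf sum_distrib_left mult.assoc)
  also have "\<dots> \<le> - 2 * a * (\<Sum>i<N. u i \<bullet> u i)"
  proof -
    have "(u i - u j) \<bullet> (c i - c j) \<ge> 0" for i j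
      using inner_clamp_diff_nonneg by (simp add: u_def c_def clamp_cube_def)
    then have "(\<Sum>i<N. \<Sum>j<N. \<psi> i j * (u i \<bullet> (c j - c i))) \<le> 0"
      by (intro symmetric_alignment_sum_nonpos) (auto simp: \<psi>_def sym nonneg)
    then show ?thesis by (simp add: divide_nonpos_nonneg)
  qed
  finally show ?thesis by (simp add: u_def)
qed

lemma has_vector_derivative_inner_self:
  fixes u :: "real \<Rightarrow> 'a::real_inner"
  assumes "(u has_vector_derivative w) (at s within S)"
  shows "((\<lambda>s. u s \<bullet> u s) has_vector_derivative 2 * (u s \<bullet> w)) (at s within S)"
proof -
  have u: "(u has_derivative (\<lambda>h. h *\<^sub>R w)) (at s within S)"
    using assms unfolding has_vector_derivative_def .
  have "((\<lambda>s. u s \<bullet> u s) has_derivative (\<lambda>h. u s \<bullet> (h *\<^sub>R w) + (h *\<^sub>R w) \<bullet> u s)) (at s within S)"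
    by (rule has_derivative_inner[OF u u])
  then show ?thesis
    unfolding has_vector_derivative_def by (simp add: inner_commute algebra_simps)
qed

lemma dissipation_integral_bound:
  fixes E E' :: "real \<Rightarrow> real"
  assumes t: "0 \<le> t"
    and E: "\<And>s. s \<in> {0..t} \<Longrightarrow> (E has_vector_derivative E' s) (at s within {0..t})"
    and E'_le: "\<And>s. s \<in> {0..t} \<Longrightarrow> E' s \<le> - c * E s"
  shows "E t + c * integral {0..t} E \<le> E 0"
proof -
  have "continuous (at s within {0..t}) E" if "s \<in> {0..t}" for s
    using E[OF that] by (rule has_vector_derivative_continuous)
  then have "continuous_on {0..t} E"
    by (simp add: continuous_on_eq_continuous_within)
  then have bound: "((\<lambda>s. - c * E s) has_integral - c * integral {0..t} E) {0..t}"
    by (intro has_integral_mult_right integrable_integral integrable_continuous_interval)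
  have "(E' has_integral E t - E 0) {0..t}"
    by (intro fundamental_theorem_of_calculus t E)
  then have "E t - E 0 \<le> - c * integral {0..t} E"
    by (rule has_integral_le[OF _ bound E'_le])
  then show ?thesis by simp
qed

lemma clipped_feedback_energy_bound:
  fixes \<Psi> :: "real^'d \<Rightarrow> real^'d \<Rightarrow> real" and y :: "nat \<Rightarrow> real \<Rightarrow> 'd phase"
  assumes sym: "\<And>x y. \<Psi> x y = \<Psi> y x" and nonneg: "\<And>x y. 0 \<le> \<Psi> x y"
    and y: "\<And>i s. i < N \<Longrightarrow> s \<in> {0..T} \<Longrightarrow>
      (y i has_vector_derivative clipped_feedback_field N \<Psi> a vbar r i (\<lambda>j. y j s)) (at s within {0..T})"
    and t: "t \<in> {0..T}"
  shows "(\<Sum>i<N. (norm (snd (y i t) - vbar))\<^sup>2) + 2 * a * integral {0..t} (\<lambda>s. \<Sum>i<N. (norm (snd (y i s) - vbar))\<^sup>2)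
    \<le> (\<Sum>i<N. (norm (snd (y i 0) - vbar))\<^sup>2)"
proof -
  define E where "E s = (\<Sum>i<N. (snd (y i s) - vbar) \<bullet> (snd (y i s) - vbar))" for s
  have "E t + 2 * a * integral {0..t} E \<le> E 0"
  proof (rule dissipation_integral_bound)
    fix s assume s: "s \<in> {0..t}"
    have "((\<lambda>s. snd (y i s) - vbar) has_vector_derivative snd (clipped_feedback_field N \<Psi> a vbar r i (\<lambda>j. y j s)))
        (at s within {0..t})" if "i < N" for i
    proof -
      have "(y i has_vector_derivative clipped_feedback_field N \<Psi> a vbar r i (\<lambda>j. y j s)) (at s within {0..t})"
        using s t by (intro has_vector_derivative_within_subset[OF y[OF that]]) auto
      then show ?thesis
        unfolding has_vector_derivative_def by (auto intro!: derivative_eq_intros)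
    qed
    then show "(E has_vector_derivative (\<Sum>i<N. 2 * ((snd (y i s) - vbar) \<bullet>
        snd (clipped_feedback_field N \<Psi> a vbar r i (\<lambda>j. y j s))))) (at s within {0..t})"
      unfolding E_def by (intro has_vector_derivative_sum has_vector_derivative_inner_self) auto
    show "(\<Sum>i<N. 2 * ((snd (y i s) - vbar) \<bullet> snd (clipped_feedback_field N \<Psi> a vbar r i (\<lambda>j. y j s))))
        \<le> - (2 * a) * E s"
      unfolding E_def using clipped_feedback_energy_rate_le[OF sym nonneg] by simp
  qed (use t in simp)
  then show ?thesis
    unfolding E_def[abs_def] by (simp add: power2_norm_eq_inner)
qed

lemma particle_traj_continuous_on:
  assumes traj: "particle_traj T \<Psi> N f x0 v0 x v" and i: "i < N" and T: "0 \<le> T"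
  shows "continuous_on {0..T} (x i)" "continuous_on {0..T} (v i)"
proof -
  define w where "w s = (1 / real N) *\<^sub>R (\<Sum>j<N. \<Psi> (x i s) (x j s) *\<^sub>R (v j s - v i s)) + f s (x i s, v i s)" for s
  have x: "(v i has_integral (x i t - x0 i)) {0..t}" and v: "(w has_integral (v i t - v0 i)) {0..t}"
    if "t \<in> {0..T}" for t
    using traj i that unfolding particle_traj_def w_def by auto
  have "continuous_on {0..T} (\<lambda>t. v0 i + integral {0..t} w)"
    using v[of T] T by (intro continuous_intros indefinite_integral_continuous_1) auto
  then show v_cont: "continuous_on {0..T} (v i)"
    by (rule continuous_on_eq) (simp add: integral_unique[OF v])
  have "continuous_on {0..T} (\<lambda>t. x0 i + integral {0..t} (v i))"
    using x[of T] T by (intro continuous_intros indefinite_integral_continuous_1) auto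
  then show "continuous_on {0..T} (x i)"
    by (rule continuous_on_eq) (simp add: integral_unique[OF x])
qed

lemma particle_traj_if_clipped_solution:
  fixes \<Psi> :: "real^'d \<Rightarrow> real^'d \<Rightarrow> real" and y :: "nat \<Rightarrow> real \<Rightarrow> 'd phase"
  assumes sol: "\<And>i t. i < N \<Longrightarrow> t \<in> {0..T} \<Longrightarrow>
      ((\<lambda>s. clipped_feedback_field N \<Psi> a vbar r i (\<lambda>j. y j s)) has_integral y i t - (x0 i, v0 i)) {0..t}"
    and bounded: "\<And>j t. j < N \<Longrightarrow> t \<in> {0..T} \<Longrightarrow> norm (snd (y j t) - vbar) \<le> r"
  shows "particle_traj T \<Psi> N (\<lambda>t z. - a *\<^sub>R (snd z - vbar)) x0 v0 (\<lambda>i t. fst (y i t)) (\<lambda>i t. snd (y i t))"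
  unfolding particle_traj_def prod.sel
proof (intro allI impI ballI conjI)
  fix i t assume i: "i < N" and t: "t \<in> {0..T}"
  let ?G = "\<lambda>s. clipped_feedback_field N \<Psi> a vbar r i (\<lambda>j. y j s)"
  have "((fst \<circ> ?G) has_integral fst (y i t - (x0 i, v0 i))) {0..t}"
    by (rule has_integral_linear[OF sol[OF i t] bounded_linear_fst])
  then show "((\<lambda>s. snd (y i s)) has_integral fst (y i t) - x0 i) {0..t}"
    by (simp add: o_def clipped_feedback_field_def)
  have "((snd \<circ> ?G) has_integral snd (y i t - (x0 i, v0 i))) {0..t}"
    by (rule has_integral_linear[OF sol[OF i t] bounded_linear_snd])
  moreover have "(snd \<circ> ?G) s = (1 / real N) *\<^sub>R (\<Sum>j<N. \<Psi> (fst (y i s)) (fst (y j s)) *\<^sub>R (snd (y j s) - snd (y i s)))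
      - a *\<^sub>R (snd (y i s) - vbar)" if "s \<in> {0..t}" for s
  proof -
    have "norm (snd (y j s) - vbar) \<le> r" if "j < N" for j
      using bounded that \<open>s \<in> {0..t}\<close> t by auto
    then show ?thesis
      using i by (simp add: clipped_feedback_field_eq)
  qed
  ultimately show "((\<lambda>s. (1 / real N) *\<^sub>R (\<Sum>j<N. \<Psi> (fst (y i s)) (fst (y j s)) *\<^sub>R (snd (y j s) - snd (y i s)))
      + - a *\<^sub>R (snd (y i s) - vbar)) has_integral snd (y i t) - v0 i) {0..t}"
    by (subst has_integral_cong[symmetric]) auto
qed

lemma linear_feedback_trajectory:
  fixes \<Psi> :: "real^'d \<Rightarrow> real^'d \<Rightarrow> real" and x0 v0 :: "nat \<Rightarrow> real^'d"
  assumes T: "0 \<le> T" and a: "0 \<le> a"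
    and lip: "Lp-lipschitz_on UNIV (\<lambda>p. \<Psi> (fst p) (snd p))" and bdd: "\<And>x y. \<bar>\<Psi> x y\<bar> \<le> M"
    and sym: "\<And>x y. \<Psi> x y = \<Psi> y x" and nonneg: "\<And>x y. 0 \<le> \<Psi> x y"
  obtains x v where "particle_traj T \<Psi> N (\<lambda>t z. - a *\<^sub>R (snd z - vbar)) x0 v0 x v"
    and "2 * a * integral {0..T} (\<lambda>t. \<Sum>i<N. (norm (v i t - vbar))\<^sup>2) \<le> (\<Sum>i<N. (norm (v0 i - vbar))\<^sup>2)"
proof -
  define E0 where "E0 = (\<Sum>i<N. (norm (v0 i - vbar))\<^sup>2)"
  define F where "F = clipped_feedback_field N \<Psi> a vbar (sqrt E0)"
  obtain L where "finite_lipschitz_system N L F"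
    using finite_lipschitz_system_clipped_feedback_field[OF lip bdd a] unfolding F_def by blast
  then interpret finite_lipschitz_system N L F .
  obtain y where cont: "\<And>i. i < N \<Longrightarrow> continuous_on {0..T} (y i)"
    and sol: "\<And>i t. i < N \<Longrightarrow> t \<in> {0..T} \<Longrightarrow> ((\<lambda>s. F i (\<lambda>j. y j s)) has_integral y i t - (x0 i, v0 i)) {0..t}"
    using exists_integral_solution[of T "\<lambda>i. (x0 i, v0 i)"] by blast
  define E where "E t = (\<Sum>i<N. (norm (snd (y i t) - vbar))\<^sup>2)" for t
  have "y i 0 = (x0 i, v0 i)" if "i < N" for i
    using integral_unique[OF sol[OF that, of 0]] T by simp
  then have E0: "E 0 = E0"
    by (simp add: E_def E0_def)
  have deriv: "(y i has_vector_derivative F i (\<lambda>j. y j s)) (at s within {0..T})"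
    if "i < N" "s \<in> {0..T}" for i s
    using cont sol that by (intro integral_solution_has_vector_derivative)
  have energy: "E t + 2 * a * integral {0..t} E \<le> E0" if "t \<in> {0..T}" for t
    unfolding E0[symmetric] E_def[abs_def] using deriv unfolding F_def
    by (rule clipped_feedback_energy_bound[OF sym nonneg _ that])
  have "norm (snd (y j t) - vbar) \<le> sqrt E0" if j: "j < N" and t: "t \<in> {0..T}" for j t
  proof -
    have "continuous_on {0..t} E"
      unfolding E_def using cont t by (auto intro!: continuous_intros continuous_on_subset[OF cont])
    then have "0 \<le> integral {0..t} E"
      by (intro integral_nonneg integrable_continuous_interval) (auto simp: E_def sum_nonneg)
    then have "(norm (snd (y j t) - vbar))\<^sup>2 \<le> E0"
      using energy[OF t] member_le_sum[of j "{..<N}" "\<lambda>i. (norm (snd (y i t) - vbar))\<^sup>2"] j a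
      by (simp add: E_def) (smt (verit) mult_nonneg_nonneg)
    then show ?thesis by (rule real_le_rsqrt)
  qed
  then have "particle_traj T \<Psi> N (\<lambda>t z. - a *\<^sub>R (snd z - vbar)) x0 v0 (\<lambda>i t. fst (y i t)) (\<lambda>i t. snd (y i t))"
    using sol unfolding F_def by (intro particle_traj_if_clipped_solution)
  moreover have "E T + 2 * a * integral {0..T} E \<le> E0"
    using energy T by simp
  then have "2 * a * integral {0..T} E \<le> E0"
    by (smt (verit) E_def sum_nonneg zero_le_power2)
  ultimately show ?thesis
    using that unfolding E_def[abs_def] E0_def by blast
qed

lemma particle_cost_linear_feedback:
  assumes T: "0 \<le> T" and lam: "0 \<le> lam"
    and traj: "particle_traj T \<Psi> N (\<lambda>t z. - a *\<^sub>R (snd z - vbar)) x0 v0 x v"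
  shows "particle_cost T lam vbar N (\<lambda>t z. - a *\<^sub>R (snd z - vbar)) x v
    = ennreal ((1 + lam * a\<^sup>2) * integral {0..T} (\<lambda>t. \<Sum>i<N. (norm (v i t - vbar))\<^sup>2) / real N)"
proof -
  define c where "c = 1 + lam * a\<^sup>2"
  define e where "e i t = (norm (v i t - vbar))\<^sup>2" for i t
  have c: "0 \<le> c" using lam by (simp add: c_def)
  have e_int: "e i integrable_on {0..T}" if "i < N" for i
    unfolding e_def using particle_traj_continuous_on(2)[OF traj that T]
    by (intro integrable_continuous_interval continuous_intros)
  have e_nonneg: "0 \<le> integral {0..T} (e i)" if "i < N" for i
    using e_int[OF that] by (rule integral_nonneg) (simp add: e_def)
  have "(\<integral>\<^sup>+ t\<in>{0..T}. ennreal ((norm (v i t - vbar))\<^sup>2 + lam * (norm (- a *\<^sub>R (v i t - vbar)))\<^sup>2) \<partial>lborel)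
      = ennreal (c * integral {0..T} (e i))" if "i < N" for i
  proof -
    have "(norm (v i t - vbar))\<^sup>2 + lam * (norm (- a *\<^sub>R (v i t - vbar)))\<^sup>2 = c * e i t" for t
      by (simp add: c_def e_def power_mult_distrib ring_distribs)
    moreover have "((\<lambda>t. c * e i t) has_integral c * integral {0..T} (e i)) {0..T}"
      by (intro has_integral_mult_right integrable_integral e_int that)
    ultimately show ?thesis
      using c by (simp add: nn_integral_has_integral_lebesgue' e_def)
  qed
  then have "particle_cost T lam vbar N (\<lambda>t z. - a *\<^sub>R (snd z - vbar)) x v
      = ennreal (1 / real N) * (\<Sum>i<N. ennreal (c * integral {0..T} (e i)))"
    by (simp add: particle_cost_def)
  also have "(\<Sum>i<N. ennreal (c * integral {0..T} (e i))) = ennreal (\<Sum>i<N. c * integral {0..T} (e i))"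
    using c e_nonneg by (intro sum_ennreal) auto
  also have "ennreal (1 / real N) * \<dots> = ennreal (c * integral {0..T} (\<lambda>t. \<Sum>i<N. e i t) / real N)"
    using e_int by (subst integral_sum) (auto simp: sum_distrib_left sum_divide_distrib ennreal_mult'[symmetric])
  finally show ?thesis
    by (simp add: c_def e_def)
qed

lemma linear_feedback_cost_le:
  fixes \<Psi> :: "real^'d \<Rightarrow> real^'d \<Rightarrow> real" and x0 v0 :: "nat \<Rightarrow> real^'d"
  assumes T: "0 \<le> T" and a: "0 < a" and lam: "0 \<le> lam"
    and lip: "Lp-lipschitz_on UNIV (\<lambda>p. \<Psi> (fst p) (snd p))" and bdd: "\<And>x y. \<bar>\<Psi> x y\<bar> \<le> M"
    and sym: "\<And>x y. \<Psi> x y = \<Psi> y x" and nonneg: "\<And>x y. 0 \<le> \<Psi> x y"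
  obtains x v where "particle_traj T \<Psi> N (\<lambda>t z. - a *\<^sub>R (snd z - vbar)) x0 v0 x v"
    and "particle_cost T lam vbar N (\<lambda>t z. - a *\<^sub>R (snd z - vbar)) x v
      \<le> ennreal ((1 + lam * a\<^sup>2) / (2 * a) * ((1 / real N) * (\<Sum>i<N. (norm (v0 i - vbar))\<^sup>2)))"
proof -
  obtain x v where traj: "particle_traj T \<Psi> N (\<lambda>t z. - a *\<^sub>R (snd z - vbar)) x0 v0 x v"
    and energy: "2 * a * integral {0..T} (\<lambda>t. \<Sum>i<N. (norm (v i t - vbar))\<^sup>2) \<le> (\<Sum>i<N. (norm (v0 i - vbar))\<^sup>2)"
    using linear_feedback_trajectory[OF T less_imp_le[OF a] lip bdd sym nonneg] by blast
  define c where "c = 1 + lam * a\<^sup>2"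
  have "c * integral {0..T} (\<lambda>t. \<Sum>i<N. (norm (v i t - vbar))\<^sup>2)
      = c / (2 * a) * (2 * a * integral {0..T} (\<lambda>t. \<Sum>i<N. (norm (v i t - vbar))\<^sup>2))"
    using a by simp
  also have "\<dots> \<le> c / (2 * a) * (\<Sum>i<N. (norm (v0 i - vbar))\<^sup>2)"
    using energy a lam by (intro mult_left_mono) (auto simp: c_def)
  finally have "c * integral {0..T} (\<lambda>t. \<Sum>i<N. (norm (v i t - vbar))\<^sup>2) / real N
      \<le> c / (2 * a) * (\<Sum>i<N. (norm (v0 i - vbar))\<^sup>2) / real N"
    by (rule divide_right_mono) simp
  then have "particle_cost T lam vbar N (\<lambda>t z. - a *\<^sub>R (snd z - vbar)) x v
      \<le> ennreal (c / (2 * a) * ((1 / real N) * (\<Sum>i<N. (norm (v0 i - vbar))\<^sup>2)))"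
    unfolding particle_cost_linear_feedback[OF T lam traj] c_def[symmetric]
    by (intro ennreal_leI) simp
  then show ?thesis
    using traj that unfolding c_def by blast
qed

lemma linear_feedback_admissible:
  fixes vbar :: "real^'d"
  assumes a: "0 \<le> a" and CB: "a * (1 + norm vbar) \<le> CB"
  shows "admissible T CB (\<lambda>t z. - a *\<^sub>R (snd z - vbar))"
  unfolding admissible_def
proof (intro conjI allI AE_I2)
  fix t
  have "a-lipschitz_on UNIV (\<lambda>z::'d phase. - a *\<^sub>R (snd z - vbar))"
  proof (rule lipschitz_onI)
    fix z w :: "'d phase"
    have "dist (- a *\<^sub>R (snd z - vbar)) (- a *\<^sub>R (snd w - vbar)) = a * norm (snd (z - w))"
      using a by (simp add: dist_norm scaleR_diff_right[symmetric] norm_minus_commute)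
    also have "\<dots> \<le> a * dist z w"
      using a norm_snd_le_norm[of "z - w"] by (simp add: dist_norm mult_left_mono)
    finally show "dist (- a *\<^sub>R (snd z - vbar)) (- a *\<^sub>R (snd w - vbar)) \<le> a * dist z w" .
  qed (rule a)
  moreover have "norm (- a *\<^sub>R (snd (0::'d phase) - vbar)) + a \<le> CB"
    using a CB by (simp add: algebra_simps)
  ultimately show "\<exists>L. L-lipschitz_on UNIV (\<lambda>z::'d phase. - a *\<^sub>R (snd z - vbar))
      \<and> norm (- a *\<^sub>R (snd (0::'d phase) - vbar)) + L \<le> CB"
    by blast
qed simp

section \<open>Empirical measures and the Wasserstein distance\<close>

lemma borel_measurable_ennreal_continuous_on:
  assumes "continuous_on UNIV g"
  shows "(\<lambda>z. ennreal (g z)) \<in> borel_measurable borel"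
proof -
  from assms have "g \<in> borel_measurable borel"
    by (rule borel_measurable_continuous_onI)
  then show ?thesis
    by (rule measurable_compose) simp
qed

lemma nn_integral_empirical:
  fixes z :: "nat \<Rightarrow> 'a::topological_space"
  assumes "1 \<le> N" and G: "G \<in> borel_measurable borel"
  shows "(\<integral>\<^sup>+ w. G w \<partial>empirical N z) = ennreal (1 / real N) * (\<Sum>i<N. G (z i))"
proof -
  have z: "z \<in> uniform_count_measure {..<N} \<rightarrow>\<^sub>M borel"
    by (simp add: measurable_cong_sets[OF sets_uniform_count_measure_count_space refl])
  have "(\<integral>\<^sup>+ w. G w \<partial>empirical N z) = (\<integral>\<^sup>+ i. G (z i) \<partial>uniform_count_measure {..<N})"
    unfolding empirical_def by (rule nn_integral_distr[OF z]) (simp add: G)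
  also have "\<dots> = (\<Sum>i<N. ennreal (1 / real N) * G (z i))"
    by (simp add: uniform_count_measure_def nn_integral_point_measure_finite)
  finally show ?thesis by (simp add: sum_distrib_left)
qed

lemma nn_integral_le_W1:
  fixes \<mu> \<nu> :: "'a::metric_space measure" and G :: "'a \<Rightarrow> real"
  assumes W: "W1 \<mu> \<nu> < ennreal e" and nonneg: "\<And>z. 0 \<le> G z" and lip: "L-lipschitz_on UNIV G"
  shows "(\<integral>\<^sup>+ z. G z \<partial>\<mu>) \<le> (\<integral>\<^sup>+ z. G z \<partial>\<nu>) + ennreal (L * e)"
proof -
  obtain \<pi> :: "('a \<times> 'a) measure" where sets: "sets \<pi> = sets borel" and fst: "distr \<pi> borel fst = \<mu>"
    and snd: "distr \<pi> borel snd = \<nu>" and cost: "(\<integral>\<^sup>+ p. ennreal (dist (fst p) (snd p)) \<partial>\<pi>) < ennreal e"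
    using W unfolding W1_def INF_less_iff by blast
  have L: "0 \<le> L" using lip by (rule lipschitz_on_nonneg)
  have G_cont: "continuous_on UNIV G"
    using lip by (rule lipschitz_on_continuous_on)
  then have G: "G \<in> borel_measurable borel"
    by (rule borel_measurable_continuous_onI)
  have meas: "f \<in> borel_measurable \<pi>" if "f \<in> borel_measurable borel" for f :: "'a \<times> 'a \<Rightarrow> 'b::topological_space"
    using that by (simp add: measurable_cong_sets[OF sets refl])
  have [measurable]: "(\<lambda>p. G (snd p)) \<in> borel_measurable \<pi>" "(\<lambda>p. dist (fst p) (snd p)) \<in> borel_measurable \<pi>"
    by (auto intro!: meas borel_measurable_continuous_onI continuous_intros continuous_on_compose2[OF G_cont])
  have "(\<integral>\<^sup>+ z. G z \<partial>\<mu>) = (\<integral>\<^sup>+ p. G (fst p) \<partial>\<pi>)"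
    unfolding fst[symmetric] using G
    by (intro nn_integral_distr meas borel_measurable_continuous_onI continuous_on_fst) auto
  also have "\<dots> \<le> (\<integral>\<^sup>+ p. ennreal (G (snd p)) + ennreal L * ennreal (dist (fst p) (snd p)) \<partial>\<pi>)"
  proof (rule nn_integral_mono)
    fix p :: "'a \<times> 'a"
    have "G (fst p) \<le> G (snd p) + L * dist (fst p) (snd p)"
      using lipschitz_onD[OF lip, of "fst p" "snd p"] by (simp add: dist_real_def)
    then show "ennreal (G (fst p)) \<le> ennreal (G (snd p)) + ennreal L * ennreal (dist (fst p) (snd p))"
      using nonneg L by (simp add: ennreal_plus[symmetric] ennreal_mult[symmetric] ennreal_leI del: ennreal_plus)
  qed
  also have "\<dots> = (\<integral>\<^sup>+ p. G (snd p) \<partial>\<pi>) + ennreal L * (\<integral>\<^sup>+ p. ennreal (dist (fst p) (snd p)) \<partial>\<pi>)"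
    by (simp add: nn_integral_add nn_integral_cmult)
  also have "(\<integral>\<^sup>+ p. G (snd p) \<partial>\<pi>) = (\<integral>\<^sup>+ z. G z \<partial>\<nu>)"
    unfolding snd[symmetric] using G
    by (intro nn_integral_distr[symmetric] meas borel_measurable_continuous_onI continuous_on_snd) auto
  also have "ennreal L * (\<integral>\<^sup>+ p. ennreal (dist (fst p) (snd p)) \<partial>\<pi>) \<le> ennreal (L * e)"
    using cost L by (simp add: ennreal_mult' mult_left_mono)
  finally show ?thesis by (simp add: add_left_mono)
qed

lemma limsup_nn_integral_le_of_W1_tendsto:
  fixes \<mu> :: "'a::metric_space measure" and G :: "'a \<Rightarrow> real"
  assumes W: "(\<lambda>k. W1 (\<mu>s k) \<mu>) \<longlonglongrightarrow> 0" and nonneg: "\<And>z. 0 \<le> G z" and lip: "L-lipschitz_on UNIV G"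
  shows "limsup (\<lambda>k. \<integral>\<^sup>+ z. G z \<partial>\<mu>s k) \<le> (\<integral>\<^sup>+ z. G z \<partial>\<mu>)"
proof (rule ennreal_le_epsilon)
  fix e :: real assume e: "0 < e"
  have L: "0 \<le> L" using lip by (rule lipschitz_on_nonneg)
  define e' where "e' = e / (L + 1)"
  have e': "0 < e'" and Le': "L * e' \<le> e"
    using e L by (auto simp: e'_def field_simps)
  have "\<forall>\<^sub>F k in sequentially. W1 (\<mu>s k) \<mu> < ennreal e'"
    using W e' by (intro order_tendstoD(2)) auto
  then have "\<forall>\<^sub>F k in sequentially. (\<integral>\<^sup>+ z. G z \<partial>\<mu>s k) \<le> (\<integral>\<^sup>+ z. G z \<partial>\<mu>) + ennreal e"
  proof eventually_elim
    case (elim k)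
    have "(\<integral>\<^sup>+ z. G z \<partial>\<mu>s k) \<le> (\<integral>\<^sup>+ z. G z \<partial>\<mu>) + ennreal (L * e')"
      using elim nonneg lip by (rule nn_integral_le_W1)
    also have "\<dots> \<le> (\<integral>\<^sup>+ z. G z \<partial>\<mu>) + ennreal e"
      using Le' by (intro add_left_mono ennreal_leI)
    finally show ?case .
  qed
  then show "limsup (\<lambda>k. \<integral>\<^sup>+ z. G z \<partial>\<mu>s k) \<le> (\<integral>\<^sup>+ z. G z \<partial>\<mu>) + ennreal e"
    by (rule Limsup_bounded)
qed

lemma lipschitz_on_min_power2:
  fixes h :: "'a::metric_space \<Rightarrow> real"
  assumes lip: "C-lipschitz_on S h" and nonneg: "\<And>x. x \<in> S \<Longrightarrow> 0 \<le> h x" and R: "0 \<le> R"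
  shows "(2 * R * C)-lipschitz_on S (\<lambda>x. (min (h x) R)\<^sup>2)"
proof (rule lipschitz_onI)
  fix x y assume x: "x \<in> S" and y: "y \<in> S"
  define p q where "p = min (h x) R" and "q = min (h y) R"
  have pq: "0 \<le> p" "p \<le> R" "0 \<le> q" "q \<le> R"
    using nonneg[OF x] nonneg[OF y] R by (auto simp: p_def q_def)
  have "\<bar>p - q\<bar> \<le> \<bar>h x - h y\<bar>"
    unfolding p_def q_def by linarith
  also have "\<dots> \<le> C * dist x y"
    using lipschitz_onD[OF lip x y] by (simp add: dist_real_def)
  finally have pq_diff: "\<bar>p - q\<bar> \<le> C * dist x y" .
  have "dist (p\<^sup>2) (q\<^sup>2) = \<bar>(p - q) * (p + q)\<bar>"
    by (simp add: dist_real_def power2_eq_square algebra_simps)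
  also have "\<dots> = \<bar>p - q\<bar> * (p + q)"
    using pq by (simp add: abs_mult)
  also have "\<dots> \<le> C * dist x y * (2 * R)"
    using pq pq_diff by (intro mult_mono) auto
  finally show "dist ((min (h x) R)\<^sup>2) ((min (h y) R)\<^sup>2) \<le> 2 * R * C * dist x y"
    by (simp add: p_def q_def mult_ac)
qed (use lipschitz_on_nonneg[OF lip] R in simp)

lemma lipschitz_on_norm_snd_diff:
  "1-lipschitz_on UNIV (\<lambda>z::'a::real_normed_vector \<times> 'b::real_normed_vector. norm (snd z - c))"
proof (rule lipschitz_onI)
  fix z w :: "'a \<times> 'b"
  have "\<bar>norm (snd z - c) - norm (snd w - c)\<bar> \<le> norm (snd (z - w))"
    using norm_triangle_ineq3[of "snd z - c" "snd w - c"] by simp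
  then show "dist (norm (snd z - c)) (norm (snd w - c)) \<le> 1 * dist z w"
    using norm_snd_le_norm[of "z - w"] by (simp add: dist_real_def dist_norm)
qed simp

lemma nn_integral_empirical_truncate:
  fixes Z :: "nat \<Rightarrow> 'a::real_normed_vector \<times> 'b::real_normed_vector"
  assumes N: "1 \<le> N" and c: "0 \<le> c" and bound: "\<And>i. i < N \<Longrightarrow> norm (snd (Z i) - vbar) \<le> R"
  shows "ennreal c * (\<integral>\<^sup>+ z. ennreal ((norm (snd z - vbar))\<^sup>2) \<partial>empirical N Z)
    = (\<integral>\<^sup>+ z. ennreal (c * (min (norm (snd z - vbar)) R)\<^sup>2) \<partial>empirical N Z)"
proof -
  have meas: "(\<lambda>z. ennreal (c * (min (norm (snd z - vbar)) R)\<^sup>2)) \<in> borel_measurable borel"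
    "(\<lambda>z. ennreal ((norm (snd z - vbar))\<^sup>2)) \<in> borel_measurable borel"
    by (intro borel_measurable_ennreal_continuous_on continuous_intros)+
  have "ennreal c * (\<Sum>i<N. ennreal ((norm (snd (Z i) - vbar))\<^sup>2))
      = (\<Sum>i<N. ennreal (c * (min (norm (snd (Z i) - vbar)) R)\<^sup>2))"
    unfolding sum_distrib_left using bound c by (intro sum.cong refl) (simp add: ennreal_mult' min_absorb1)
  then show ?thesis
    unfolding nn_integral_empirical[OF N meas(1)] nn_integral_empirical[OF N meas(2)]
    by (metis mult.left_commute)
qed

section \<open>Measurability of the running cost\<close>

lemma borel_measurable_lebesgue_on_AE_eq:
  fixes g h :: "'a::euclidean_space \<Rightarrow> 'b::euclidean_space"
  assumes S: "S \<in> sets lebesgue" and h: "h \<in> borel_measurable (lebesgue_on S)"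
    and ae: "AE x in lebesgue_on S. h x = g x"
  shows "g \<in> borel_measurable (lebesgue_on S)"
proof -
  have "(\<lambda>x. indicator S x *\<^sub>R h x) \<in> borel_measurable lebesgue"
    using h S by (simp add: borel_measurable_restrict_space_iff)
  moreover have "AE x in lebesgue. indicator S x *\<^sub>R h x = indicator S x *\<^sub>R g x"
    using ae S by (simp add: AE_restrict_space_iff) (auto elim: AE_mp)
  ultimately have "(\<lambda>x. indicator S x *\<^sub>R g x) \<in> borel_measurable lebesgue"
    by (rule borel_measurable_AE)
  then show ?thesis
    using S by (simp add: borel_measurable_restrict_space_iff)
qed

definition round_down :: "nat \<Rightarrow> real \<Rightarrow> real" where
  "round_down n t = real_of_int \<lfloor>real (Suc n) * t\<rfloor> / real (Suc n)"

lemma round_down_le: "round_down n t \<le> t"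
  using of_int_floor_le[of "real (Suc n) * t"] by (simp add: round_down_def divide_le_eq mult.commute)

lemma round_down_nonneg: "0 \<le> t \<Longrightarrow> 0 \<le> round_down n t"
  by (simp add: round_down_def)

lemma round_down_tendsto: "(\<lambda>n. round_down n t) \<longlonglongrightarrow> t"
proof (rule tendsto_sandwich[OF _ _ _ tendsto_const])
  show "\<forall>\<^sub>F n in sequentially. t - 1 / real (Suc n) \<le> round_down n t"
  proof (intro always_eventually allI)
    fix n
    have "real (Suc n) * t - 1 \<le> real_of_int \<lfloor>real (Suc n) * t\<rfloor>"
      using real_of_int_floor_add_one_gt[of "real (Suc n) * t"] by simp
    then have "(real (Suc n) * t - 1) / real (Suc n) \<le> round_down n t"
      unfolding round_down_def by (rule divide_right_mono) simp
    then show "t - 1 / real (Suc n) \<le> round_down n t"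
      by (simp add: diff_divide_distrib del: of_nat_Suc)
  qed
  have "(\<lambda>n. t - 1 / real (Suc n)) \<longlonglongrightarrow> t - 0"
    by (intro tendsto_diff tendsto_const LIMSEQ_inverse_real_of_nat[unfolded inverse_eq_divide])
  then show "(\<lambda>n. t - 1 / real (Suc n)) \<longlonglongrightarrow> t"
    by simp
qed (simp add: round_down_le)

text \<open>On the full-measure set where \<open>f t\<close> is continuous, \<open>f t (z t)\<close> is the limit of
  \<open>f t (z (round_down n t))\<close>, and for fixed \<open>n\<close> these are measurable in \<open>t\<close> because \<open>z\<close> is
  only evaluated at countably many points.\<close>
lemma caratheodory_comp_measurable:
  fixes f :: "real \<Rightarrow> 'a::metric_space \<Rightarrow> 'b::euclidean_space"
  assumes meas: "\<And>z. (\<lambda>t. f t z) \<in> borel_measurable (lebesgue_on {0..T})"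
    and AE_cont: "AE t in lebesgue_on {0..T}. continuous_on UNIV (f t)"
    and z: "continuous_on {0..T} z"
  shows "(\<lambda>t. f t (z t)) \<in> borel_measurable (lebesgue_on {0..T})"
proof -
  obtain N0 where N0: "{t \<in> space (lebesgue_on {0..T}). \<not> continuous_on UNIV (f t)} \<subseteq> N0"
    and N0_null: "N0 \<in> null_sets (lebesgue_on {0..T})"
    by (rule AE_E[OF AE_cont]) (metis null_setsI)
  define \<phi> where "\<phi> n t = (if t \<in> N0 then 0 else f t (z (round_down n t)))" for n t
  define h where "h t = (if t \<in> N0 then 0 else f t (z t))" for t
  have \<phi>_meas: "\<phi> n \<in> borel_measurable (lebesgue_on {0..T})" for n
  proof -
    have "(\<lambda>t. \<lfloor>real (Suc n) * t\<rfloor>) \<in> lebesgue_on {0..T} \<rightarrow>\<^sub>M count_space UNIV"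
    proof (rule measurable_compose[OF _ measurable_real_floor])
      show "(\<lambda>t. real (Suc n) * t) \<in> borel_measurable (lebesgue_on {0..T})"
        by (rule continuous_imp_measurable_on_sets_lebesgue) (auto intro: continuous_intros)
    qed
    then have "(\<lambda>t. (\<lambda>k t. f t (z (real_of_int k / real (Suc n)))) \<lfloor>real (Suc n) * t\<rfloor> t)
        \<in> borel_measurable (lebesgue_on {0..T})"
      by (rule measurable_compose_countable[rotated]) (rule meas)
    then have "(\<lambda>t. f t (z (round_down n t))) \<in> borel_measurable (lebesgue_on {0..T})"
      by (simp add: round_down_def)
    moreover have "N0 \<inter> space (lebesgue_on {0..T}) \<in> sets (lebesgue_on {0..T})"
      using null_setsD2[OF N0_null] sets.sets_into_space[OF null_setsD2[OF N0_null]]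
      by (simp add: Int_absorb2)
    ultimately show ?thesis
      unfolding \<phi>_def by (intro measurable_If_set measurable_const) auto
  qed
  have "(\<lambda>n. \<phi> n t) \<longlonglongrightarrow> h t" if t: "t \<in> space (lebesgue_on {0..T})" for t
  proof (cases "t \<in> N0")
    case False
    then have f_cont: "continuous_on UNIV (f t)" using N0 t by auto
    have "\<forall>\<^sub>F n in sequentially. round_down n t \<in> {0..T}"
      using t round_down_nonneg round_down_le order_trans by (intro always_eventually allI) fastforce
    then have "(\<lambda>n. z (round_down n t)) \<longlonglongrightarrow> z t"
      by (rule continuous_on_tendsto_compose[OF z round_down_tendsto, rotated]) (use t in simp)
    then have "(\<lambda>n. f t (z (round_down n t))) \<longlonglongrightarrow> f t (z t)"
      by (rule continuous_on_tendsto_compose[OF f_cont]) simp_all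
    then show ?thesis using False by (simp add: \<phi>_def h_def)
  qed (simp add: \<phi>_def h_def)
  then have h: "h \<in> borel_measurable (lebesgue_on {0..T})"
    by (rule borel_measurable_LIMSEQ_metric[OF \<phi>_meas])
  have "AE t in lebesgue_on {0..T}. h t = f t (z t)"
    by (rule AE_I'[OF N0_null]) (auto simp: h_def)
  with h show ?thesis
    by (rule borel_measurable_lebesgue_on_AE_eq[rotated]) simp
qed

lemma nn_integral_empirical_running_cost:
  fixes g :: "'d phase \<Rightarrow> real^'d"
  assumes N: "1 \<le> N" and g: "continuous_on UNIV g"
  shows "(\<integral>\<^sup>+ z. ennreal ((norm (snd z - vbar))\<^sup>2 + lam * (norm (g z))\<^sup>2) \<partial>empirical N Z)
    = ennreal (1 / real N) * (\<Sum>i<N. ennreal ((norm (snd (Z i) - vbar))\<^sup>2 + lam * (norm (g (Z i)))\<^sup>2))"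
  by (intro nn_integral_empirical N borel_measurable_ennreal_continuous_on continuous_intros g)

lemma running_cost_measurable:
  fixes f :: "real \<Rightarrow> 'd phase \<Rightarrow> real^'d"
  assumes T: "0 \<le> T" and adm: "admissible T CB f" and traj: "particle_traj T \<Psi> N f x0 v0 x v" and i: "i < N"
  shows "(\<lambda>t. ennreal ((norm (v i t - vbar))\<^sup>2 + lam * (norm (f t (x i t, v i t)))\<^sup>2) * indicator {0..T} t)
    \<in> borel_measurable lebesgue"
proof -
  have meas: "\<And>z. (\<lambda>t. f t z) \<in> borel_measurable (lebesgue_on {0..T})"
    and lip: "AE t in lebesgue_on {0..T}. \<exists>L. L-lipschitz_on UNIV (f t) \<and> norm (f t 0) + L \<le> CB"
    using adm unfolding admissible_def by auto
  from lip have "AE t in lebesgue_on {0..T}. continuous_on UNIV (f t)"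
    by eventually_elim (auto intro: lipschitz_on_continuous_on)
  moreover have "continuous_on {0..T} (\<lambda>t. (x i t, v i t))"
    using particle_traj_continuous_on[OF traj i T] by (intro continuous_intros)
  ultimately have [measurable]: "(\<lambda>t. f t (x i t, v i t)) \<in> borel_measurable (lebesgue_on {0..T})"
    by (rule caratheodory_comp_measurable[OF meas])
  have [measurable]: "v i \<in> borel_measurable (lebesgue_on {0..T})"
    using particle_traj_continuous_on(2)[OF traj i T] by (rule continuous_imp_measurable_on_sets_lebesgue) simp
  have "(\<lambda>t. ennreal ((norm (v i t - vbar))\<^sup>2 + lam * (norm (f t (x i t, v i t)))\<^sup>2))
      \<in> borel_measurable (lebesgue_on {0..T})"
    by measurable
  then show ?thesis
    by (simp add: borel_measurable_restrict_space_iff_ennreal)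
qed

lemma empirical_cost_eq_particle_cost:
  fixes f :: "real \<Rightarrow> 'd phase \<Rightarrow> real^'d" and x v :: "nat \<Rightarrow> real \<Rightarrow> real^'d"
  assumes T: "0 \<le> T" and N: "1 \<le> N" and adm: "admissible T CB f"
    and traj: "particle_traj T \<Psi> N f x0 v0 x v"
  shows "(\<integral>\<^sup>+ t\<in>{0..T}. (\<integral>\<^sup>+ z. ennreal ((norm (snd z - vbar))\<^sup>2 + lam * (norm (f t z))\<^sup>2)
      \<partial>empirical N (\<lambda>i. (x i t, v i t))) \<partial>lborel) = particle_cost T lam vbar N f x v"
proof -
  define c where "c i t = ennreal ((norm (v i t - vbar))\<^sup>2 + lam * (norm (f t (x i t, v i t)))\<^sup>2) * indicator {0..T} t"
    for i t
  have c_meas: "c i \<in> borel_measurable lebesgue" if "i < N" for i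
    unfolding c_def using T adm traj that by (rule running_cost_measurable)
  have "AE t in lebesgue_on {0..T}. \<exists>L. L-lipschitz_on UNIV (f t) \<and> norm (f t 0) + L \<le> CB"
    using adm unfolding admissible_def by auto
  then have "AE t in lebesgue_on {0..T}. continuous_on UNIV (f t)"
    by eventually_elim (auto intro: lipschitz_on_continuous_on)
  then have "AE t in lebesgue. t \<in> {0..T} \<longrightarrow> continuous_on UNIV (f t)"
    by (simp add: AE_restrict_space_iff)
  then have "AE t in lebesgue. (\<integral>\<^sup>+ z. ennreal ((norm (snd z - vbar))\<^sup>2 + lam * (norm (f t z))\<^sup>2)
      \<partial>empirical N (\<lambda>i. (x i t, v i t))) * indicator {0..T} t = (\<Sum>i<N. ennreal (1 / real N) * c i t)"
    by eventually_elim (auto simp: c_def nn_integral_empirical_running_cost[OF N] sum_distrib_left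
        sum_distrib_right mult_ac split: split_indicator)
  then have "(\<integral>\<^sup>+ t\<in>{0..T}. (\<integral>\<^sup>+ z. ennreal ((norm (snd z - vbar))\<^sup>2 + lam * (norm (f t z))\<^sup>2)
      \<partial>empirical N (\<lambda>i. (x i t, v i t))) \<partial>lebesgue) = (\<integral>\<^sup>+ t. (\<Sum>i<N. ennreal (1 / real N) * c i t) \<partial>lebesgue)"
    by (rule nn_integral_cong_AE)
  also have "\<dots> = (\<Sum>i<N. \<integral>\<^sup>+ t. ennreal (1 / real N) * c i t \<partial>lebesgue)"
    using c_meas by (intro nn_integral_sum borel_measurable_times_ennreal) auto
  also have "\<dots> = (\<Sum>i<N. ennreal (1 / real N) * (\<integral>\<^sup>+ t. c i t \<partial>lebesgue))"
    using c_meas by (intro sum.cong refl nn_integral_cmult) auto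
  finally show ?thesis
    by (simp add: nn_integral_completion particle_cost_def c_def sum_distrib_left)
qed

section \<open>The limit argument\<close>

lemma optimal_control_empirical_cost_le:
  fixes \<Psi> :: "real^'d \<Rightarrow> real^'d \<Rightarrow> real" and f :: "real \<Rightarrow> 'd phase \<Rightarrow> real^'d"
  assumes T: "0 \<le> T" and lam: "0 < lam" and N: "1 \<le> N"
    and lip: "Lp-lipschitz_on UNIV (\<lambda>p. \<Psi> (fst p) (snd p))" and bdd: "\<And>x y. \<bar>\<Psi> x y\<bar> \<le> M"
    and sym: "\<And>x y. \<Psi> x y = \<Psi> y x" and nonneg: "\<And>x y. 0 \<le> \<Psi> x y"
    and CB: "(1 + norm vbar) / sqrt lam \<le> CB"
    and opt: "optimal_control T \<Psi> lam vbar CB N x0 v0 f x v"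
  shows "(\<integral>\<^sup>+ t\<in>{0..T}. (\<integral>\<^sup>+ z. ennreal ((norm (snd z - vbar))\<^sup>2 + lam * (norm (f t z))\<^sup>2)
      \<partial>empirical N (\<lambda>i. (x i t, v i t))) \<partial>lborel)
    \<le> ennreal (sqrt lam) * (\<integral>\<^sup>+ z. ennreal ((norm (snd z - vbar))\<^sup>2) \<partial>empirical N (\<lambda>i. (x0 i, v0 i)))"
proof -
  define a where "a = 1 / sqrt lam"
  define g :: "real \<Rightarrow> 'd phase \<Rightarrow> real^'d" where "g t z = - a *\<^sub>R (snd z - vbar)" for t z
  have a: "0 < a" and cost_factor: "(1 + lam * a\<^sup>2) / (2 * a) = sqrt lam"
    using lam by (auto simp: a_def power_divide field_simps real_sqrt_mult[symmetric])
  obtain y w where traj: "particle_traj T \<Psi> N g x0 v0 y w"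
    and cost: "particle_cost T lam vbar N g y w
      \<le> ennreal (sqrt lam * ((1 / real N) * (\<Sum>i<N. (norm (v0 i - vbar))\<^sup>2)))"
    using linear_feedback_cost_le[OF T a less_imp_le[OF lam] lip bdd sym nonneg] unfolding g_def cost_factor
    by metis
  have f_adm: "admissible T CB f" and f_traj: "particle_traj T \<Psi> N f x0 v0 x v"
    using opt unfolding optimal_control_def by auto
  have "admissible T CB g"
    unfolding g_def using a CB by (intro linear_feedback_admissible) (simp_all add: a_def mult.commute)
  then have "particle_cost T lam vbar N f x v \<le> particle_cost T lam vbar N g y w"
    using opt traj unfolding optimal_control_def by blast
  then have "(\<integral>\<^sup>+ t\<in>{0..T}. (\<integral>\<^sup>+ z. ennreal ((norm (snd z - vbar))\<^sup>2 + lam * (norm (f t z))\<^sup>2)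
      \<partial>empirical N (\<lambda>i. (x i t, v i t))) \<partial>lborel) \<le> particle_cost T lam vbar N g y w"
    by (simp only: empirical_cost_eq_particle_cost[OF T N f_adm f_traj])
  also note cost
  also have "ennreal (sqrt lam * ((1 / real N) * (\<Sum>i<N. (norm (v0 i - vbar))\<^sup>2)))
      = ennreal (sqrt lam) * (ennreal (1 / real N) * (\<Sum>i<N. ennreal ((norm (v0 i - vbar))\<^sup>2)))"
    by (simp only: ennreal_mult'[OF real_sqrt_ge_zero[OF less_imp_le[OF lam]]] ennreal_mult'[of "1 / real N"]
        of_nat_0_le_iff divide_nonneg_nonneg zero_le_one sum_ennreal zero_le_power2)
  also have "\<dots> = ennreal (sqrt lam) * (\<integral>\<^sup>+ z. ennreal ((norm (snd z - vbar))\<^sup>2) \<partial>empirical N (\<lambda>i. (x0 i, v0 i)))"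
  proof -
    have "(\<lambda>z::'d phase. ennreal ((norm (snd z - vbar))\<^sup>2)) \<in> borel_measurable borel"
      by (intro borel_measurable_ennreal_continuous_on continuous_intros)
    then show ?thesis
      by (simp only: nn_integral_empirical[OF N] snd_conv)
  qed
  finally show ?thesis .
qed

lemma limsup_optimal_empirical_cost_le:
  fixes \<Psi> :: "real^'d \<Rightarrow> real^'d \<Rightarrow> real" and \<mu>0 :: "'d phase measure"
    and x0 v0 :: "nat \<Rightarrow> nat \<Rightarrow> real^'d" and fk :: "nat \<Rightarrow> real \<Rightarrow> 'd phase \<Rightarrow> real^'d"
  assumes T: "0 \<le> T" and lam: "0 < lam"
    and lip: "Lp-lipschitz_on UNIV (\<lambda>p. \<Psi> (fst p) (snd p))" and bdd: "\<And>x y. \<bar>\<Psi> x y\<bar> \<le> M"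
    and sym: "\<And>x y. \<Psi> x y = \<Psi> y x" and nonneg: "\<And>x y. 0 \<le> \<Psi> x y"
    and CB: "(1 + norm vbar) / sqrt lam \<le> CB" and \<mu>0: "sets \<mu>0 = sets borel"
    and N: "\<And>k. 1 \<le> Nk k" and init_ball: "\<And>k i. i < Nk k \<Longrightarrow> (x0 k i, v0 k i) \<in> ball 0 R"
    and init_conv: "(\<lambda>k. W1 (empirical (Nk k) (\<lambda>i. (x0 k i, v0 k i))) \<mu>0) \<longlonglongrightarrow> 0"
    and opt: "\<And>k. optimal_control T \<Psi> lam vbar CB (Nk k) (x0 k) (v0 k) (fk k) (xk k) (vk k)"
  shows "limsup (\<lambda>k. \<integral>\<^sup>+ t\<in>{0..T}. (\<integral>\<^sup>+ z. ennreal ((norm (snd z - vbar))\<^sup>2 + lam * (norm (fk k t z))\<^sup>2)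
      \<partial>empirical (Nk k) (\<lambda>i. (xk k i t, vk k i t))) \<partial>lborel)
    \<le> ennreal (sqrt lam) * (\<integral>\<^sup>+ z. ennreal ((norm (snd z - vbar))\<^sup>2) \<partial>\<mu>0)"
proof -
  \<comment> \<open>\<open>|v - vbar|\<^sup>2\<close> is not Lipschitz, but on the initial data it agrees with the truncation \<open>G\<close>\<close>
  define Rb where "Rb = R + norm vbar"
  define G where "G z = sqrt lam * (min (norm (snd z - vbar)) Rb)\<^sup>2" for z :: "'d phase"
  have "norm (x0 0 0, v0 0 0) < R"
    using init_ball[of 0 0] N[of 0] by simp
  then have Rb: "0 \<le> Rb"
    unfolding Rb_def by (smt (verit) norm_ge_zero)
  have G_lip: "(sqrt lam * (2 * Rb * 1))-lipschitz_on UNIV G"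
    unfolding G_def using Rb lam
    by (intro lipschitz_on_cmult_real_nonneg lipschitz_on_min_power2 lipschitz_on_norm_snd_diff) auto
  have "(\<integral>\<^sup>+ t\<in>{0..T}. (\<integral>\<^sup>+ z. ennreal ((norm (snd z - vbar))\<^sup>2 + lam * (norm (fk k t z))\<^sup>2)
      \<partial>empirical (Nk k) (\<lambda>i. (xk k i t, vk k i t))) \<partial>lborel)
    \<le> ennreal (sqrt lam) * (\<integral>\<^sup>+ z. ennreal ((norm (snd z - vbar))\<^sup>2) \<partial>empirical (Nk k) (\<lambda>i. (x0 k i, v0 k i)))"
    for k by (rule optimal_control_empirical_cost_le[OF T lam N lip bdd sym nonneg CB opt])
  also have "\<dots> k = (\<integral>\<^sup>+ z. ennreal (G z) \<partial>empirical (Nk k) (\<lambda>i. (x0 k i, v0 k i)))" for k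
  proof -
    have "norm (v0 k i - vbar) \<le> Rb" if "i < Nk k" for i
      using init_ball[OF that] norm_snd_le[of "v0 k i" "x0 k i"] norm_triangle_ineq4[of "v0 k i" vbar]
      by (simp add: Rb_def)
    then show ?thesis
      unfolding G_def using N lam by (intro nn_integral_empirical_truncate) auto
  qed
  finally have "limsup (\<lambda>k. \<integral>\<^sup>+ t\<in>{0..T}. (\<integral>\<^sup>+ z. ennreal ((norm (snd z - vbar))\<^sup>2 + lam * (norm (fk k t z))\<^sup>2)
      \<partial>empirical (Nk k) (\<lambda>i. (xk k i t, vk k i t))) \<partial>lborel)
    \<le> limsup (\<lambda>k. \<integral>\<^sup>+ z. ennreal (G z) \<partial>empirical (Nk k) (\<lambda>i. (x0 k i, v0 k i)))"
    by (intro Limsup_mono always_eventually allI)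
  also have "\<dots> \<le> (\<integral>\<^sup>+ z. ennreal (G z) \<partial>\<mu>0)"
    by (rule limsup_nn_integral_le_of_W1_tendsto[OF init_conv _ G_lip]) (use lam in \<open>simp add: G_def\<close>)
  also have "\<dots> \<le> (\<integral>\<^sup>+ z. ennreal (sqrt lam) * ennreal ((norm (snd z - vbar))\<^sup>2) \<partial>\<mu>0)"
    unfolding G_def using lam Rb
    by (intro nn_integral_mono) (auto simp: ennreal_mult'[symmetric] intro!: ennreal_leI mult_left_mono power_mono)
  also have "\<dots> = ennreal (sqrt lam) * (\<integral>\<^sup>+ z. ennreal ((norm (snd z - vbar))\<^sup>2) \<partial>\<mu>0)"
  proof (rule nn_integral_cmult)
    show "(\<lambda>z. ennreal ((norm (snd z - vbar))\<^sup>2)) \<in> borel_measurable \<mu>0"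
      unfolding measurable_cong_sets[OF \<mu>0 refl]
      by (intro borel_measurable_ennreal_continuous_on continuous_intros)
  qed
  finally show ?thesis .
qed

theorem lemma3p2:
  fixes T lam CB R :: real
    and vbar :: "real^'d"
    and \<Psi> :: "real^'d \<Rightarrow> real^'d \<Rightarrow> real"
    and \<mu>0 :: "'d phase measure"
    and Nk :: "nat \<Rightarrow> nat"
    and x0 v0 :: "nat \<Rightarrow> nat \<Rightarrow> real^'d"
    and fk :: "nat \<Rightarrow> real \<Rightarrow> 'd phase \<Rightarrow> real^'d"
    and xk vk :: "nat \<Rightarrow> nat \<Rightarrow> real \<Rightarrow> real^'d"
    and \<mu> :: "real \<Rightarrow> 'd phase measure"
    and f :: "real \<Rightarrow> 'd phase \<Rightarrow> real^'d"
  assumes T_pos: "T > 0"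
    and lam_pos: "lam > 0"
    and Psi_lip: "\<exists>L. L-lipschitz_on UNIV (\<lambda>p. \<Psi> (fst p) (snd p))"
    and Psi_sym: "\<forall>x y. \<Psi> x y = \<Psi> y x"
    and Psi_nonneg: "\<forall>x y. \<Psi> x y \<ge> 0"
    and Psi_bdd: "\<exists>M. \<forall>x y. \<bar>\<Psi> x y\<bar> \<le> M"
    and CB_ge: "CB \<ge> (1 + norm vbar) / sqrt lam"
    and mu0_prob: "prob_space \<mu>0"
    and mu0_borel: "sets \<mu>0 = sets borel"
    and mu0_supp: "msupp \<mu>0 \<subseteq> ball 0 R"
    and Nk_pos: "\<forall>k. Nk k \<ge> 1"
    and Nk_lim: "filterlim Nk at_top sequentially"
    and init_ball: "\<forall>k i. i < Nk k \<longrightarrow> (x0 k i, v0 k i) \<in> ball 0 R"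
    and init_conv: "(\<lambda>k. W1 (empirical (Nk k) (\<lambda>i. (x0 k i, v0 k i))) \<mu>0) \<longlonglongrightarrow> 0"
    and opt: "\<forall>k. optimal_control T \<Psi> lam vbar CB (Nk k) (x0 k) (v0 k) (fk k) (xk k) (vk k)"
    and mu_P1: "\<forall>t\<in>{0..T}. P1 (\<mu> t)"
    and mu_cont: "\<forall>t\<in>{0..T}. \<forall>e>0. \<exists>\<delta>>0. \<forall>s\<in>{0..T}. \<bar>s - t\<bar> < \<delta> \<longrightarrow> W1 (\<mu> s) (\<mu> t) < ennreal e"
    and f_adm: "admissible T CB f"
    and weak: "weak_solution T \<Psi> \<mu>0 f \<mu>"
    and mu_init: "\<mu> 0 = \<mu>0"
    and mu_supp: "\<forall>t\<in>{0..T}. msupp (\<mu> t) \<subseteq> ball 0 R"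
    and unif_conv: "\<forall>e>0. \<exists>K. \<forall>k\<ge>K. \<forall>t\<in>{0..T}.
        W1 (empirical (Nk k) (\<lambda>i. (xk k i t, vk k i t))) (\<mu> t) < ennreal e"
    and lsc: "(\<integral>\<^sup>+ t\<in>{0..T}. (\<integral>\<^sup>+ z. ennreal ((norm (snd z - vbar))\<^sup>2 + lam * (norm (f t z))\<^sup>2) \<partial>(\<mu> t)) \<partial>lborel)
       \<le> liminf (\<lambda>k. \<integral>\<^sup>+ t\<in>{0..T}. (\<integral>\<^sup>+ z. ennreal ((norm (snd z - vbar))\<^sup>2 + lam * (norm (fk k t z))\<^sup>2)
             \<partial>(empirical (Nk k) (\<lambda>i. (xk k i t, vk k i t)))) \<partial>lborel)"
  shows "(\<integral>\<^sup>+ t\<in>{0..T}. (\<integral>\<^sup>+ z. ennreal ((norm (snd z - vbar))\<^sup>2 + lam * (norm (f t z))\<^sup>2) \<partial>(\<mu> t)) \<partial>lborel)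
         \<le> ennreal (sqrt lam) * (\<integral>\<^sup>+ z. ennreal ((norm (snd z - vbar))\<^sup>2) \<partial>\<mu>0)"
proof -
  obtain Lp where lip: "Lp-lipschitz_on UNIV (\<lambda>p. \<Psi> (fst p) (snd p))" using Psi_lip by blast
  obtain M where bdd: "\<And>x y. \<bar>\<Psi> x y\<bar> \<le> M" using Psi_bdd by blast
  have "limsup (\<lambda>k. \<integral>\<^sup>+ t\<in>{0..T}. (\<integral>\<^sup>+ z. ennreal ((norm (snd z - vbar))\<^sup>2 + lam * (norm (fk k t z))\<^sup>2)
      \<partial>empirical (Nk k) (\<lambda>i. (xk k i t, vk k i t))) \<partial>lborel)
    \<le> ennreal (sqrt lam) * (\<integral>\<^sup>+ z. ennreal ((norm (snd z - vbar))\<^sup>2) \<partial>\<mu>0)"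
    using T_pos Psi_sym Psi_nonneg Nk_pos init_ball opt
    by (intro limsup_optimal_empirical_cost_le[OF _ lam_pos lip bdd _ _ CB_ge mu0_borel _ _ init_conv]) auto
  with lsc show ?thesis
    by (meson Liminf_le_Limsup order_trans trivial_limit_sequentially)
qed

end
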